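(* Let $n\geq 2$, let $A\subseteq\mathbb{R}^n$ be a bounded connected open set and let $u\in C^2(A)$ satisfy $\Delta u=-1$ in $A$. Suppose there exists $x_0\in A$ such that the function $$v(x)=u(x_0)+\langle\nabla u(x_0),x-x_0\rangle-u(x)$$ is nonnegative and $\sqrt{v}$ is convex in a neighborhood of $x_0$. Then $u$ is a quadratic polynomial. *)

theory Defs
  imports "HOL-Analysis.Analysis"
begin

definition partial_deriv :: "(real^'n \<Rightarrow> real) \<Rightarrow> 'n \<Rightarrow> real^'n \<Rightarrow> real" where
  "partial_deriv u i x = frechet_derivative u (at x) (axis i 1)"

definition grad :: "(real^'n \<Rightarrow> real) \<Rightarrow> real^'n \<Rightarrow> real^'n" where
  "grad u x = (\<chi> i. partial_deriv u i x)"

definition C2_on :: "(real^'n) set \<Rightarrow> (real^'n \<Rightarrow> real) \<Rightarrow> bool" where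
  "C2_on A u \<longleftrightarrow>
     (\<forall>x\<in>A. u differentiable (at x)) \<and>
     (\<forall>i. \<forall>x\<in>A. partial_deriv u i differentiable (at x)) \<and>
     (\<forall>i j. continuous_on A (partial_deriv (partial_deriv u i) j))"

definition laplacian :: "(real^'n \<Rightarrow> real) \<Rightarrow> real^'n \<Rightarrow> real" where
  "laplacian u x = (\<Sum>i\<in>UNIV. partial_deriv (partial_deriv u i) i x)"

definition quadratic_polynomial_on :: "(real^'n) set \<Rightarrow> (real^'n \<Rightarrow> real) \<Rightarrow> bool" where
  "quadratic_polynomial_on A u \<longleftrightarrow>
     (\<exists>(a::'n \<Rightarrow> 'n \<Rightarrow> real) (b::'n \<Rightarrow> real) (c::real).
        \<forall>x\<in>A. u x = (\<Sum>i\<in>UNIV. \<Sum>j\<in>UNIV. a i j * x$i * x$j) + (\<Sum>i\<in>UNIV. b i * x$i) + c)"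

end

theory Submission
  imports Defs
begin

text \<open>Let \<open>P\<close> be the second order Taylor polynomial of \<open>u\<close> at \<open>x0\<close> and \<open>h = P - u\<close>. Since
  \<open>\<Delta>u\<close> is constant, \<open>\<Delta>P = \<Delta>u(x0) = \<Delta>u\<close>, so \<open>h\<close> is harmonic and hence satisfies a mean value
  property with respect to the smooth radial weight \<open>(1 - |y|\<^sup>2)\<^sup>2\<^sub>+\<close>.
  Along a segment from \<open>x0\<close>, the function \<open>v\<close> vanishes to second order at \<open>x0\<close>, and convexity of
  \<open>sqrt v\<close> gives \<open>v(x0 + s d) \<le> s\<^sup>2 v(x0 + d)\<close>; letting \<open>s \<rightarrow> 0\<close> shows \<open>h \<ge> 0\<close> near \<open>x0\<close>.
  As \<open>h(x0) = 0\<close>, the mean value property forces \<open>h = 0\<close> near \<open>x0\<close>. Differentiating the mean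
  value property under the integral sign yields Cauchy estimates
  \<open>|\<partial>\<^sub>e\<^sup>k h| \<le> (C k / r)\<^sup>k M\<close>, so \<open>h\<close> is real analytic along lines. Hence the interior of the zero set
  of \<open>h\<close> is relatively closed in the connected set \<open>A\<close>, and \<open>u = P\<close> on \<open>A\<close>.\<close>

section \<open>Radial bump function\<close>

definition cutoff :: "real \<Rightarrow> real" where
  "cutoff s = max 0 (1 - s)"

lemma cutoff_nonneg: "cutoff s \<ge> 0"
  by (simp add: cutoff_def)

lemma continuous_on_cutoff [continuous_intros]:
  "continuous_on S f \<Longrightarrow> continuous_on S (\<lambda>x. cutoff (f x))"
  unfolding cutoff_def by (intro continuous_intros)

lemma cutoff_power_has_real_derivative_at_1:
  assumes k: "k \<ge> 2"
  shows "((\<lambda>s. cutoff s ^ k) has_real_derivative 0) (at 1)"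
proof -
  have "cutoff y ^ k \<le> \<bar>y - 1\<bar> ^ 2" if "\<bar>y - 1\<bar> < 1" for y
  proof -
    have le1: "cutoff y \<le> 1" and le: "cutoff y \<le> \<bar>y - 1\<bar>"
      using that by (auto simp: cutoff_def)
    have "cutoff y ^ k = cutoff y ^ 2 * cutoff y ^ (k - 2)"
      using k by (metis le_add_diff_inverse power_add)
    also have "\<dots> \<le> cutoff y ^ 2"
      using le1 cutoff_nonneg[of y] by (simp add: mult_left_le power_le_one)
    also have "\<dots> \<le> \<bar>y - 1\<bar> ^ 2"
      by (rule power_mono[OF le cutoff_nonneg])
    finally show ?thesis .
  qed
  then have "\<forall>\<^sub>F y in at 1. norm ((cutoff y ^ k - cutoff 1 ^ k) / (y - 1)) \<le> \<bar>y - 1\<bar>"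
    using eventually_at_ball'[of 1 1 UNIV] k cutoff_nonneg
    by (auto elim!: eventually_mono simp: cutoff_def dist_real_def
        power2_eq_square divide_le_eq zero_power abs_minus_commute)
  moreover have "((\<lambda>y::real. \<bar>y - 1\<bar>) \<longlongrightarrow> 0) (at 1)"
    by (intro tendsto_eq_intros) auto
  ultimately have "((\<lambda>y. (cutoff y ^ k - cutoff 1 ^ k) / (y - 1)) \<longlongrightarrow> 0) (at 1)"
    by (rule Lim_null_comparison)
  then show ?thesis
    by (simp add: has_field_derivative_iff)
qed

lemma cutoff_power_has_real_derivative:
  assumes k: "k \<ge> 2"
  shows "((\<lambda>s. cutoff s ^ k) has_real_derivative (- real k * cutoff s ^ (k - 1))) (at s)"
proof (cases s "1::real" rule: linorder_cases)
  case less
  have "((\<lambda>s. (1 - s) ^ k) has_real_derivative (- real k * cutoff s ^ (k - 1))) (at s)"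
    using less by (auto intro!: derivative_eq_intros simp: cutoff_def)
  then show ?thesis
    by (rule has_field_derivative_transform_within_open[where S="{..<1}"])
       (use less in \<open>auto simp: cutoff_def\<close>)
next
  case equal
  then show ?thesis
    using cutoff_power_has_real_derivative_at_1[OF k] k by (simp add: cutoff_def power_0_left)
next
  case greater
  have "((\<lambda>s. 0) has_real_derivative (- real k * cutoff s ^ (k - 1))) (at s)"
    using greater k by (simp add: cutoff_def power_0_left)
  then show ?thesis
    by (rule has_field_derivative_transform_within_open[where S="{1<..}"])
       (use greater k in \<open>auto simp: cutoff_def\<close>)
qed

lemma cutoff_inner_power_has_derivative:
  assumes "k \<ge> 2"
  shows "((\<lambda>y::real^'n. cutoff (y \<bullet> y) ^ k) has_derivative
           (\<lambda>v. - real k * cutoff (y \<bullet> y) ^ (k - 1) * (2 * (y \<bullet> v)))) (at y)"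
proof -
  have "((\<lambda>y::real^'n. y \<bullet> y) has_derivative (\<lambda>v. 2 * (y \<bullet> v))) (at y)"
    by (auto intro!: derivative_eq_intros simp: inner_commute)
  moreover have "((\<lambda>s. cutoff s ^ k) has_derivative (*) (- real k * cutoff (y \<bullet> y) ^ (k - 1)))
      (at (y \<bullet> y))"
    using cutoff_power_has_real_derivative[OF assms] by (simp add: has_field_derivative_def)
  ultimately show ?thesis
    using diff_chain_at by (fastforce simp: o_def)
qed

lemma cutoff_inner_eq_0: "norm y \<ge> 1 \<Longrightarrow> cutoff (y \<bullet> y) = 0"
  by (simp add: cutoff_def power2_norm_eq_inner[symmetric])

lemma cutoff_inner_pos: "norm y < 1 \<Longrightarrow> cutoff (y \<bullet> y) > 0"
  by (simp add: cutoff_def power2_norm_eq_inner[symmetric] power_less_one_iff)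

definition bump :: "real^'n \<Rightarrow> real" where
  "bump y = cutoff (y \<bullet> y) ^ 2"

definition bump_grad :: "real^'n \<Rightarrow> real^'n" where
  "bump_grad y = (-4 * cutoff (y \<bullet> y)) *\<^sub>R y"

text \<open>A radial potential whose gradient is \<open>bump y *\<^sub>R y\<close>: it turns the radial derivative
  of a bump-weighted average into a divergence.\<close>
definition bump_potential :: "real^'n \<Rightarrow> real" where
  "bump_potential y = - (cutoff (y \<bullet> y) ^ 3) / 6"

lemma bump_has_derivative: "(bump has_derivative (\<lambda>v. bump_grad y \<bullet> v)) (at y)"
  unfolding bump_def[abs_def]
  by (rule has_derivative_eq_rhs[OF cutoff_inner_power_has_derivative[of 2 y]])
     (auto simp: bump_grad_def fun_eq_iff algebra_simps)

lemma bump_potential_has_derivative: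
  fixes y :: "real^'n"
  shows "(bump_potential has_derivative (\<lambda>v. bump y * (y \<bullet> v))) (at y)"
proof -
  have "((\<lambda>y. - (1/6) * cutoff (y \<bullet> y) ^ 3) has_derivative
       (\<lambda>v. - (1/6) * (- real 3 * cutoff (y \<bullet> y) ^ (3 - 1) * (2 * (y \<bullet> v))))) (at y)"
    by (intro has_derivative_mult_right cutoff_inner_power_has_derivative) simp
  then have "((\<lambda>y. - (1/6) * cutoff (y \<bullet> y) ^ 3) has_derivative (\<lambda>v. bump y * (y \<bullet> v))) (at y)"
    by (rule has_derivative_eq_rhs) (auto simp: bump_def fun_eq_iff algebra_simps)
  moreover have "bump_potential = (\<lambda>y::real^'n. - (1/6) * cutoff (y \<bullet> y) ^ 3)"
    by (simp add: bump_potential_def fun_eq_iff)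
  ultimately show ?thesis
    by simp
qed

lemma bump_eq_0: "norm y \<ge> 1 \<Longrightarrow> bump y = 0"
  and bump_grad_eq_0: "norm y \<ge> 1 \<Longrightarrow> bump_grad y = 0"
  and bump_potential_eq_0: "norm y \<ge> 1 \<Longrightarrow> bump_potential y = 0"
  by (simp_all add: bump_def bump_grad_def bump_potential_def cutoff_inner_eq_0)

lemma bump_nonneg: "bump y \<ge> 0"
  by (simp add: bump_def)

lemma bump_pos: "norm y < 1 \<Longrightarrow> bump y > 0"
  using cutoff_inner_pos[of y] by (simp add: bump_def)

lemma continuous_on_bump: "continuous_on S bump"
  and continuous_on_bump_grad: "continuous_on S bump_grad"
  and continuous_on_bump_potential: "continuous_on S bump_potential"
  unfolding bump_def bump_grad_def bump_potential_def by (intro continuous_intros; simp)+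

lemma norm_bump_grad_le: "norm (bump_grad y) \<le> 4"
proof (cases "norm y < 1")
  case True
  have "cutoff (y \<bullet> y) \<le> 1"
    by (simp add: cutoff_def)
  then have "4 * cutoff (y \<bullet> y) * norm y \<le> 4 * 1 * 1"
    using True cutoff_nonneg by (intro mult_mono) auto
  then show ?thesis
    by (simp add: bump_grad_def cutoff_nonneg)
next
  case False
  then show ?thesis by (simp add: bump_grad_eq_0)
qed

definition cube :: "real^'n \<Rightarrow> real \<Rightarrow> (real^'n) set" where
  "cube c r = cbox (c - r *\<^sub>R 1) (c + r *\<^sub>R 1)"

lemma mem_cube_iff: "z \<in> cube c r \<longleftrightarrow> (\<forall>i. \<bar>z$i - c$i\<bar> \<le> r)"
  by (auto simp: cube_def mem_box_cart abs_le_iff algebra_simps)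

lemma cube_0_1: "cube 0 1 = cbox (-1) 1"
  by (simp add: cube_def)

lemma center_mem_cube: "r \<ge> 0 \<Longrightarrow> c \<in> cube c r"
  by (simp add: mem_cube_iff)

lemma norm_le_if_mem_cube:
  fixes z :: "real^'n"
  assumes "z \<in> cube c r"
  shows "norm (z - c) \<le> r * real CARD('n)"
proof -
  have "(\<Sum>i\<in>UNIV. \<bar>(z - c)$i\<bar>) \<le> of_nat CARD('n) * r"
    using assms by (intro sum_bounded_above) (simp add: mem_cube_iff)
  then show ?thesis
    using norm_le_l1_cart[of "z - c"] by (simp add: mult.commute)
qed

lemma mem_cube_if_norm_le:
  fixes z :: "real^'n"
  assumes "norm (z - c) \<le> r"
  shows "z \<in> cube c r"
  using component_le_norm_cart[of "z - c"] assms by (auto simp: mem_cube_iff intro: order_trans)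

lemma norm_le_if_mem_unit_cube: "(y::real^'n) \<in> cbox (-1) 1 \<Longrightarrow> norm y \<le> real CARD('n)"
  using norm_le_if_mem_cube[of y 0 1] by (simp add: cube_0_1)

lemma mem_unit_cube_if_norm_le: "norm (y::real^'n) \<le> 1 \<Longrightarrow> y \<in> cbox (-1) 1"
  using mem_cube_if_norm_le[of y 0 1] by (simp add: cube_0_1)

lemma scaled_unit_cube_subset:
  fixes a :: "real^'n"
  assumes "cball a (R * real CARD('n)) \<subseteq> A" "0 \<le> r" "r \<le> R" "y \<in> cbox (-1) 1"
  shows "a + r *\<^sub>R y \<in> A"
proof -
  have "norm (r *\<^sub>R y) \<le> R * real CARD('n)"
    using assms(2-4) norm_le_if_mem_unit_cube[of y] by (auto intro!: mult_mono)
  then show ?thesis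
    using assms(1) by (auto simp: dist_norm)
qed

lemma cube_subset_cball_card:
  fixes x0 :: "real^'n"
  shows "cube x0 r \<subseteq> cball x0 (r * real CARD('n))"
  using norm_le_if_mem_cube[of _ x0 r] by (auto simp: dist_norm norm_minus_commute)

lemma continuous_on_compose_affine:
  fixes g :: "real^'n \<Rightarrow> 'b::topological_space"
  assumes "continuous_on A g" "\<And>y. y \<in> S \<Longrightarrow> a + r *\<^sub>R y \<in> A"
  shows "continuous_on S (\<lambda>y. g (a + r *\<^sub>R y))"
  by (rule continuous_on_compose2[OF assms(1)]) (use assms(2) in \<open>auto intro!: continuous_intros\<close>)

lemma has_integral_scaled_unit_cube:
  fixes f :: "real^'n \<Rightarrow> real"
  assumes R: "R > 0" and f: "((\<lambda>y. f (x + R *\<^sub>R y)) has_integral I) (cbox (-1) 1)"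
  shows "(f has_integral (I * R ^ CARD('n))) (cube x R)"
proof -
  have "(I * R ^ CARD('n)) /\<^sub>R R ^ DIM(real^'n) = I"
    using R by simp
  moreover have "cbox ((x - R *\<^sub>R 1 - x) /\<^sub>R R) ((x + R *\<^sub>R 1 - x) /\<^sub>R R) = cbox (-1) 1"
    using R by simp
  moreover have "((\<lambda>y. f (R *\<^sub>R y + x)) has_integral I) (cbox (-1) 1)"
    using f by (simp add: add.commute)
  ultimately have "((\<lambda>y. f (R *\<^sub>R y + x)) has_integral ((I * R ^ CARD('n)) /\<^sub>R R ^ DIM(real^'n)))
      (cbox ((x - R *\<^sub>R 1 - x) /\<^sub>R R) ((x + R *\<^sub>R 1 - x) /\<^sub>R R))"
    by (simp only:)
  then show ?thesis
    unfolding cube_def by (rule has_integral_affinity_iff[OF R, THEN iffD1])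
qed

lemma continuous_on_vanishing_outside_ball:
  fixes F :: "real^'n \<Rightarrow> 'b::real_normed_vector"
  assumes "continuous_on (cball 0 1) F" and "\<And>y. norm y \<ge> 1 \<Longrightarrow> F y = 0"
  shows "continuous_on UNIV F"
proof -
  have "closed {y::real^'n. norm y \<ge> 1}"
    by (intro closed_Collect_le continuous_intros)
  then have "continuous_on (cball 0 1 \<union> {y. norm y \<ge> 1}) (\<lambda>y. if norm y \<le> 1 then F y else 0)"
    using assms by (intro continuous_on_cases closed_cball continuous_on_const) auto
  moreover have "cball 0 1 \<union> {y::real^'n. norm y \<ge> 1} = UNIV"
    by auto
  moreover have "(\<lambda>y. if norm y \<le> 1 then F y else 0) = F"
    using assms(2) by (auto simp: fun_eq_iff)
  ultimately show ?thesis
    by metis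
qed

lemma has_integral_translate_in_cube_0_3:
  fixes f :: "real^'n \<Rightarrow> real"
  assumes "(f has_integral I) (cbox (-1) 1)" and "\<And>x. x \<notin> cbox (-1) 1 \<Longrightarrow> f x = 0"
    and "\<And>j. \<bar>c$j\<bar> \<le> 2"
  shows "((\<lambda>y. f (y + c)) has_integral I) (cube 0 3)"
proof -
  have "cbox (-1) 1 \<subseteq> cube c 3"
  proof
    fix x :: "real^'n"
    assume "x \<in> cbox (-1) 1"
    then have "\<bar>x$j\<bar> \<le> 1" for j
      by (simp add: mem_box_cart abs_le_iff)
    then show "x \<in> cube c 3"
      unfolding mem_cube_iff using abs_triangle_ineq4 assms(3) by (smt (verit))
  qed
  then have "(f has_integral I) (cbox (c - 3 *\<^sub>R 1) (c + 3 *\<^sub>R 1))"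
    using has_integral_on_superset[OF assms(1,2)] unfolding cube_def by blast
  from has_integral_affinity'[OF this, of 1 c] show ?thesis
    by (simp add: cube_def)
qed

lemma has_derivative_if_vanishing_outside_ball:
  fixes f :: "real^'n \<Rightarrow> real" and F :: "real^'n \<Rightarrow> real^'n"
  assumes f_eq_0: "\<And>y. norm y \<ge> 1 \<Longrightarrow> f y = 0"
    and f_deriv: "\<And>y. norm y \<le> 1 \<Longrightarrow> (f has_derivative (\<lambda>v. F y \<bullet> v)) (at y)"
    and F_eq_0: "\<And>y. norm y \<ge> 1 \<Longrightarrow> F y = 0"
  shows "(f has_derivative (\<lambda>v. F y \<bullet> v)) (at y)"
proof (cases "norm y \<le> 1")
  case False
  have "((\<lambda>y. 0) has_derivative (\<lambda>v. F y \<bullet> v)) (at y)"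
    using False F_eq_0[of y] by simp
  then show ?thesis
  proof (rule has_derivative_transform_within_open[where s="- cball 0 1"])
    show "\<And>x. x \<in> - cball 0 1 \<Longrightarrow> 0 = f x"
      using f_eq_0 by simp
  qed (use False in auto)
qed (rule f_deriv)

lemma has_field_derivative_integral_translate:
  fixes f :: "real^'n \<Rightarrow> real" and F :: "real^'n \<Rightarrow> real^'n"
  assumes deriv: "\<And>y. (f has_derivative (\<lambda>v. F y \<bullet> v)) (at y)" and F_cont: "continuous_on UNIV F"
  shows "((\<lambda>t. integral (cbox a b) (\<lambda>y. f (y + t *\<^sub>R e))) has_field_derivative
    integral (cbox a b) (\<lambda>y. F y \<bullet> e)) (at 0)"
proof -
  have f_cont: "continuous_on UNIV f"
    by (intro continuous_at_imp_continuous_on ballI has_derivative_continuous[OF deriv])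
  have "((\<lambda>t. integral (cbox a b) (\<lambda>y. f (y + t *\<^sub>R e))) has_field_derivative
      integral (cbox a b) (\<lambda>y. F (y + 0 *\<^sub>R e) \<bullet> e)) (at 0 within {-1..1})"
  proof (rule leibniz_rule_field_derivative)
    fix t :: real and y :: "real^'n"
    have "((\<lambda>t. y + t *\<^sub>R e) has_derivative (\<lambda>s. s *\<^sub>R e)) (at t)"
      by (auto intro!: derivative_eq_intros)
    from diff_chain_at[OF this deriv]
    have "((\<lambda>t. f (y + t *\<^sub>R e)) has_derivative (\<lambda>s. (F (y + t *\<^sub>R e) \<bullet> e) * s)) (at t)"
      by (simp add: o_def mult.commute)
    then show "((\<lambda>t. f (y + t *\<^sub>R e)) has_field_derivative F (y + t *\<^sub>R e) \<bullet> e) (at t within {-1..1})"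
      unfolding has_field_derivative_def by (rule has_derivative_at_withinI)
  next
    fix t :: real
    show "(\<lambda>y. f (y + t *\<^sub>R e)) integrable_on cbox a b"
      by (intro integrable_continuous continuous_on_compose2[OF f_cont] continuous_intros) auto
  next
    have c: "continuous_on UNIV (\<lambda>p::real \<times> (real^'n). F (snd p + fst p *\<^sub>R e))"
      by (intro continuous_on_compose2[OF F_cont] continuous_intros) auto
    show "continuous_on ({-1..1} \<times> cbox a b) (\<lambda>(t, y). F (y + t *\<^sub>R e) \<bullet> e)"
      by (auto simp: split_def intro!: continuous_intros continuous_on_subset[OF c])
  qed auto
  moreover have "at (0::real) within {-1..1} = at 0"
    by (rule at_within_interior) simp
  ultimately show ?thesis
    by simp
qed

text \<open>The integral of \<open>f (y + t e)\<close> over the cube of half-side 3 does not depend on \<open>t\<close>, while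
  its derivative in \<open>t\<close> is the integral of the partial derivative.\<close>
lemma integral_gradient_component_eq_0:
  fixes f :: "real^'n \<Rightarrow> real" and F :: "real^'n \<Rightarrow> real^'n"
  assumes f_eq_0: "\<And>y. norm y \<ge> 1 \<Longrightarrow> f y = 0"
    and f_deriv: "\<And>y. norm y \<le> 1 \<Longrightarrow> (f has_derivative (\<lambda>v. F y \<bullet> v)) (at y)"
    and F_cont: "continuous_on (cball 0 1) F"
    and F_eq_0: "\<And>y. norm y \<ge> 1 \<Longrightarrow> F y = 0"
  shows "integral (cbox (-1) 1) (\<lambda>y. F y $ i) = 0"
proof -
  define e :: "real^'n" where "e = axis i 1"
  have outside: "norm x \<ge> 1" if "x \<notin> cbox (-1) 1" for x :: "real^'n"
    using that mem_unit_cube_if_norm_le by force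
  have deriv: "(f has_derivative (\<lambda>v. F y \<bullet> v)) (at y)" for y
    using has_derivative_if_vanishing_outside_ball[OF f_eq_0 f_deriv F_eq_0] .
  have F_cont_UNIV: "continuous_on UNIV F"
    by (rule continuous_on_vanishing_outside_ball[OF F_cont F_eq_0])
  have "continuous_on UNIV f"
    by (intro continuous_at_imp_continuous_on ballI has_derivative_continuous[OF deriv])
  then have I: "(f has_integral integral (cbox (-1) 1) f) (cbox (-1) 1)"
    by (intro integrable_integral integrable_continuous continuous_on_subset[OF \<open>continuous_on UNIV f\<close>]) auto
  have "integral (cube 0 3) (\<lambda>y. f (y + t *\<^sub>R e)) = integral (cbox (-1) 1) f" if "t \<in> {-1..1}" for t
  proof (intro integral_unique has_integral_translate_in_cube_0_3[OF I])
    show "\<And>x. x \<notin> cbox (-1) 1 \<Longrightarrow> f x = 0"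
      using outside f_eq_0 by blast
    show "\<And>j. \<bar>(t *\<^sub>R e) $ j\<bar> \<le> 2"
      using that by (auto simp: e_def axis_def)
  qed
  then have "((\<lambda>t. integral (cube 0 3) (\<lambda>y. f (y + t *\<^sub>R e))) has_field_derivative 0) (at 0)"
    by (intro has_field_derivative_transform_within_open[where S="{-1<..<1}", OF DERIV_const]) auto
  moreover have "((\<lambda>t. integral (cube 0 3) (\<lambda>y. f (y + t *\<^sub>R e))) has_field_derivative
      integral (cube 0 3) (\<lambda>y. F y $ i)) (at 0)"
    using has_field_derivative_integral_translate[OF deriv F_cont_UNIV, of "0 - 3 *\<^sub>R 1" "0 + 3 *\<^sub>R 1" e]
    by (simp add: cube_def e_def inner_axis)
  ultimately have "integral (cube 0 3) (\<lambda>y. F y $ i) = 0"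
    by (metis DERIV_unique)
  moreover have "((\<lambda>y. F y $ i) has_integral integral (cbox (-1) 1) (\<lambda>y. F y $ i)) (cube 0 3)"
  proof -
    have "continuous_on (cbox (-1) 1) (\<lambda>y. F y $ i)"
      by (intro continuous_intros continuous_on_subset[OF F_cont_UNIV]) auto
    then show ?thesis
      using has_integral_translate_in_cube_0_3[of "\<lambda>y. F y $ i" _ 0] outside F_eq_0
      by (simp add: integrable_integral integrable_continuous)
  qed
  ultimately show ?thesis
    using integral_unique by metis
qed

section \<open>The mean value property of harmonic functions\<close>

definition bump_mass :: "'n::finite itself \<Rightarrow> real" where
  "bump_mass _ = integral (cbox (-1) (1::real^'n)) bump"

lemma bump_mass_pos: "bump_mass TYPE('n::finite) > 0"
proof -
  let ?C = "cbox (-1) (1::real^'n)"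
  have "(0::real^'n) \<in> box (-1) 1"
    by (simp add: mem_box_cart)
  then have "integral ?C bump \<noteq> 0"
    using integral_cbox_eq_0_iff[OF continuous_on_bump, of "-1" 1] bump_pos[of "0::real^'n"]
      bump_nonneg box_subset_cbox by fastforce
  moreover have "integral ?C bump \<ge> 0"
    by (intro integral_nonneg integrable_continuous continuous_on_bump bump_nonneg)
  ultimately show ?thesis
    by (simp add: bump_mass_def)
qed

text \<open>A weighted mean value property with weight \<open>bump ((z - a) / R)\<close>, supported in
  \<open>ball a R\<close>; the condition on \<open>cball a (R * real CARD('n))\<close> keeps the scaled unit cube in \<open>A\<close>.\<close>
definition bump_mean_value_on :: "(real^'n) set \<Rightarrow> (real^'n \<Rightarrow> real) \<Rightarrow> bool" where
  "bump_mean_value_on A h \<longleftrightarrow> continuous_on A h \<and>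
     (\<forall>a R. 0 < R \<longrightarrow> cball a (R * real CARD('n)) \<subseteq> A \<longrightarrow>
        integral (cbox (-1) 1) (\<lambda>y. h (a + R *\<^sub>R y) * bump y) = h a * bump_mass TYPE('n))"

text \<open>Since the gradient of \<open>bump_potential\<close> is \<open>bump y *\<^sub>R y\<close> and \<open>H\<close> has trace zero, the
  integrand is the divergence of \<open>y \<mapsto> bump_potential y *\<^sub>R G (a + r *\<^sub>R y)\<close>.\<close>
lemma integral_bump_radial_component_eq_0:
  fixes G :: "real^'n \<Rightarrow> real^'n" and H :: "real^'n \<Rightarrow> real^'n^'n"
  assumes G_deriv: "\<And>x i. x \<in> A \<Longrightarrow> ((\<lambda>x. G x $ i) has_derivative (\<lambda>v. H x $ i \<bullet> v)) (at x)"
    and H_cont: "continuous_on A H"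
    and trace: "\<And>x. x \<in> A \<Longrightarrow> (\<Sum>i\<in>UNIV. H x $ i $ i) = 0"
    and sub: "\<And>y. y \<in> cbox (-1) 1 \<Longrightarrow> a + r *\<^sub>R y \<in> A"
  shows "integral (cbox (-1) 1) (\<lambda>y. (G (a + r *\<^sub>R y) \<bullet> y) * bump y) = 0"
proof -
  let ?C = "cbox (-1) (1::real^'n)"
  have sub_ball: "a + r *\<^sub>R y \<in> A" if "norm y \<le> 1" for y
    using sub mem_unit_cube_if_norm_le that by blast
  have G_cont: "continuous_on A (\<lambda>x. G x $ i)" for i
    by (intro continuous_at_imp_continuous_on ballI has_derivative_continuous[OF G_deriv])
  define F where "F i y = (bump_potential y * r) *\<^sub>R H (a + r *\<^sub>R y) $ i
    + (G (a + r *\<^sub>R y) $ i * bump y) *\<^sub>R y" for i y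
  have F_cont: "continuous_on S (F i)" if "\<And>y. y \<in> S \<Longrightarrow> a + r *\<^sub>R y \<in> A" for S i
    unfolding F_def[abs_def] using that
    by (intro continuous_intros continuous_on_bump continuous_on_bump_potential
        continuous_on_compose_affine[OF H_cont] continuous_on_compose_affine[OF G_cont])
  have F_integral: "integral ?C (\<lambda>y. F i y $ i) = 0" for i
  proof (rule integral_gradient_component_eq_0[where f="\<lambda>y. bump_potential y * G (a + r *\<^sub>R y) $ i"])
    fix y :: "real^'n"
    assume y: "norm y \<le> 1"
    have "((\<lambda>y. a + r *\<^sub>R y) has_derivative (\<lambda>v. r *\<^sub>R v)) (at y)"
      by (auto intro!: derivative_eq_intros)
    from diff_chain_at[OF this G_deriv[OF sub_ball[OF y]]]
    have "((\<lambda>y. G (a + r *\<^sub>R y) $ i) has_derivative (\<lambda>v. H (a + r *\<^sub>R y) $ i \<bullet> (r *\<^sub>R v))) (at y)"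
      by (simp add: o_def)
    from has_derivative_mult[OF bump_potential_has_derivative this]
    show "((\<lambda>y. bump_potential y * G (a + r *\<^sub>R y) $ i) has_derivative (\<lambda>v. F i y \<bullet> v)) (at y)"
      by (rule has_derivative_eq_rhs) (simp add: fun_eq_iff F_def algebra_simps inner_add_left)
  qed (use F_cont[of "cball 0 1"] sub_ball in
        \<open>auto simp: F_def bump_eq_0 bump_potential_eq_0\<close>)
  have "(\<Sum>i\<in>UNIV. F i y $ i) = (G (a + r *\<^sub>R y) \<bullet> y) * bump y" if "y \<in> ?C" for y
  proof -
    have "(\<Sum>i\<in>UNIV. F i y $ i) = bump_potential y * r * (\<Sum>i\<in>UNIV. H (a + r *\<^sub>R y) $ i $ i)
        + (\<Sum>i\<in>UNIV. G (a + r *\<^sub>R y) $ i * y $ i) * bump y"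
      by (simp add: F_def sum.distrib sum_distrib_left sum_distrib_right algebra_simps)
    then show ?thesis
      using trace[OF sub[OF that]] by (simp add: inner_vec_def)
  qed
  then have "integral ?C (\<lambda>y. (G (a + r *\<^sub>R y) \<bullet> y) * bump y) = integral ?C (\<lambda>y. \<Sum>i\<in>UNIV. F i y $ i)"
    by (intro integral_cong) simp
  also have "\<dots> = (\<Sum>i\<in>UNIV. integral ?C (\<lambda>y. F i y $ i))"
    using F_cont[OF sub] by (intro integral_sum integrable_continuous continuous_intros) auto
  finally show ?thesis
    by (simp add: F_integral)
qed

lemma has_field_derivative_bump_average_radius:
  fixes h :: "real^'n \<Rightarrow> real" and G :: "real^'n \<Rightarrow> real^'n"
  assumes h_deriv: "\<And>x. x \<in> A \<Longrightarrow> (h has_derivative (\<lambda>v. G x \<bullet> v)) (at x)"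
    and G_cont: "continuous_on A G"
    and in_A: "\<And>r y. r \<in> {0..R} \<Longrightarrow> y \<in> cbox (-1) 1 \<Longrightarrow> a + r *\<^sub>R y \<in> A"
    and r: "r \<in> {0..R}"
  shows "((\<lambda>r. integral (cbox (-1) 1) (\<lambda>y. h (a + r *\<^sub>R y) * bump y)) has_field_derivative
    integral (cbox (-1) 1) (\<lambda>y. (G (a + r *\<^sub>R y) \<bullet> y) * bump y)) (at r within {0..R})"
proof (rule leibniz_rule_field_derivative)
  fix s :: real and y :: "real^'n"
  assume "s \<in> {0..R}" "y \<in> cbox (-1) 1"
  have "((\<lambda>s. a + s *\<^sub>R y) has_derivative (\<lambda>t. t *\<^sub>R y)) (at s)"
    by (auto intro!: derivative_eq_intros)
  from diff_chain_at[OF this h_deriv[OF in_A]] \<open>s \<in> {0..R}\<close> \<open>y \<in> cbox (-1) 1\<close>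
  have "((\<lambda>s. h (a + s *\<^sub>R y)) has_derivative (\<lambda>t. G (a + s *\<^sub>R y) \<bullet> (t *\<^sub>R y))) (at s)"
    by (simp add: o_def)
  then have "((\<lambda>s. h (a + s *\<^sub>R y) * bump y) has_derivative
      (\<lambda>t. ((G (a + s *\<^sub>R y) \<bullet> y) * bump y) * t)) (at s)"
    by (rule has_derivative_mult_left[THEN has_derivative_eq_rhs]) (simp add: fun_eq_iff)
  then show "((\<lambda>s. h (a + s *\<^sub>R y) * bump y) has_field_derivative
      (G (a + s *\<^sub>R y) \<bullet> y) * bump y) (at s within {0..R})"
    unfolding has_field_derivative_def by (rule has_derivative_at_withinI)
next
  fix s :: real
  assume "s \<in> {0..R}"
  moreover have "continuous_on A h"
    by (intro continuous_at_imp_continuous_on ballI has_derivative_continuous[OF h_deriv])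
  ultimately show "(\<lambda>y. h (a + s *\<^sub>R y) * bump y) integrable_on cbox (-1) 1"
    using in_A by (intro integrable_continuous continuous_intros continuous_on_bump
        continuous_on_compose_affine[of A h]) auto
next
  have "continuous_on ({0..R} \<times> cbox (-1) 1) (\<lambda>p. G (a + fst p *\<^sub>R snd p))"
    by (rule continuous_on_compose2[OF G_cont]) (use in_A in \<open>auto intro!: continuous_intros\<close>)
  then show "continuous_on ({0..R} \<times> cbox (-1) 1) (\<lambda>(s, y). (G (a + s *\<^sub>R y) \<bullet> y) * bump y)"
    unfolding split_def
    by (intro continuous_intros continuous_on_compose2[OF continuous_on_bump]) auto
qed (use r in auto)

text \<open>The bump-weighted average of \<open>h\<close> over \<open>ball a r\<close> has vanishing derivative in \<open>r\<close>,
  and at \<open>r = 0\<close> it is \<open>h a\<close> times the mass of the bump.\<close>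
lemma bump_mean_value_on_if_trace_eq_0:
  fixes h :: "real^'n \<Rightarrow> real" and G :: "real^'n \<Rightarrow> real^'n" and H :: "real^'n \<Rightarrow> real^'n^'n"
  assumes h_deriv: "\<And>x. x \<in> A \<Longrightarrow> (h has_derivative (\<lambda>v. G x \<bullet> v)) (at x)"
    and G_deriv: "\<And>x i. x \<in> A \<Longrightarrow> ((\<lambda>x. G x $ i) has_derivative (\<lambda>v. H x $ i \<bullet> v)) (at x)"
    and H_cont: "continuous_on A H"
    and trace: "\<And>x. x \<in> A \<Longrightarrow> (\<Sum>i\<in>UNIV. H x $ i $ i) = 0"
  shows "bump_mean_value_on A h"
  unfolding bump_mean_value_on_def
proof (intro conjI allI impI)
  show "continuous_on A h"
    by (intro continuous_at_imp_continuous_on ballI has_derivative_continuous[OF h_deriv])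
  fix a :: "real^'n" and R :: real
  assume R: "0 < R" and sub: "cball a (R * real CARD('n)) \<subseteq> A"
  let ?C = "cbox (-1) (1::real^'n)"
  define Psi where "Psi r = integral ?C (\<lambda>y. h (a + r *\<^sub>R y) * bump y)" for r
  have in_A: "a + r *\<^sub>R y \<in> A" if "r \<in> {0..R}" "y \<in> ?C" for r y
    using scaled_unit_cube_subset[OF sub] that by auto
  have "continuous_on A (\<lambda>x. \<chi> i. G x $ i)"
    by (intro continuous_intros continuous_at_imp_continuous_on ballI
        has_derivative_continuous[OF G_deriv])
  then have "continuous_on A G"
    by simp
  from has_field_derivative_bump_average_radius[OF h_deriv this in_A]
  have "(Psi has_field_derivative integral ?C (\<lambda>y. (G (a + r *\<^sub>R y) \<bullet> y) * bump y))
      (at r within {0..R})" if "r \<in> {0..R}" for r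
    using that unfolding Psi_def by blast
  moreover have "integral ?C (\<lambda>y. (G (a + r *\<^sub>R y) \<bullet> y) * bump y) = 0" if "r \<in> {0..R}" for r
    using that in_A
    by (intro integral_bump_radial_component_eq_0[OF G_deriv H_cont trace]) auto
  ultimately have "(Psi has_derivative (\<lambda>_. 0)) (at r within {0..R})" if "r \<in> {0..R}" for r
    using that by (simp add: has_field_derivative_def mult_zero_left[abs_def])
  then obtain c where "\<And>r. r \<in> {0..R} \<Longrightarrow> Psi r = c"
    using has_derivative_zero_constant[of "{0..R}" Psi] by auto
  then have "Psi R = Psi 0"
    using R by simp
  then show "integral ?C (\<lambda>y. h (a + R *\<^sub>R y) * bump y) = h a * bump_mass TYPE('n)"
    by (simp add: Psi_def bump_mass_def)
qed

section \<open>Differentiating the mean value property\<close>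

lemma bump_mean_value_onD:
  fixes h :: "real^'n \<Rightarrow> real"
  assumes "bump_mean_value_on A h"
  shows bump_mean_value_on_imp_continuous_on: "continuous_on A h"
    and bump_mean_value_onD_integral: "0 < R \<Longrightarrow> cball a (R * real CARD('n)) \<subseteq> A \<Longrightarrow>
      integral (cbox (-1) 1) (\<lambda>y. h (a + R *\<^sub>R y) * bump y) = h a * bump_mass TYPE('n)"
  using assms by (simp_all add: bump_mean_value_on_def)

lemma open_obtain_cball_card_subset:
  fixes x :: "real^'n"
  assumes "open A" "x \<in> A"
  obtains R where "R > 0" "cball x (2 * R * real CARD('n)) \<subseteq> A"
proof -
  obtain \<epsilon> where "\<epsilon> > 0" "cball x \<epsilon> \<subseteq> A"
    using open_contains_cball assms by blast
  then show ?thesis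
    by (intro that[of "\<epsilon> / (2 * real CARD('n))"]) auto
qed

text \<open>Rewriting the mean value property at all points near \<open>x0\<close> as an integral over one fixed
  cube moves the dependence on the point into the smooth kernel.\<close>
lemma has_integral_bump_kernel:
  fixes h :: "real^'n \<Rightarrow> real"
  assumes mv: "bump_mean_value_on A h" and R: "R > 0"
    and sub: "cball x0 (2 * R * real CARD('n)) \<subseteq> A" and x: "x \<in> ball x0 R"
  shows "((\<lambda>z. h z * bump ((1/R) *\<^sub>R (z - x))) has_integral
      (h x * bump_mass TYPE('n) * R ^ CARD('n))) (cube x0 (2 * R))"
proof -
  let ?C = "cbox (-1) (1::real^'n)"
  define f where "f z = h z * bump ((1/R) *\<^sub>R (z - x))" for z
  have sub_x: "cball x (R * real CARD('n)) \<subseteq> A"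
  proof
    fix z
    assume "z \<in> cball x (R * real CARD('n))"
    moreover have "R \<le> R * real CARD('n)"
      using R by simp
    ultimately have "dist x0 z \<le> 2 * R * real CARD('n)"
      using x dist_triangle[of x0 z x] by simp
    then show "z \<in> A"
      using sub by auto
  qed
  have "(\<lambda>y. h (x + R *\<^sub>R y) * bump y) integrable_on ?C"
    using scaled_unit_cube_subset[OF sub_x] R
    by (intro integrable_continuous continuous_intros continuous_on_bump
        continuous_on_compose_affine[OF bump_mean_value_on_imp_continuous_on[OF mv]]) auto
  then have "((\<lambda>y. h (x + R *\<^sub>R y) * bump y) has_integral (h x * bump_mass TYPE('n))) ?C"
    using bump_mean_value_onD_integral[OF mv R sub_x] by (metis integrable_integral)
  then have "(f has_integral (h x * bump_mass TYPE('n) * R ^ CARD('n))) (cube x R)"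
    using has_integral_scaled_unit_cube[OF R, of f x] R by (simp add: f_def)
  moreover have "cube x R \<subseteq> cube x0 (2 * R)"
    using x component_le_norm_cart[of "x - x0"]
    by (auto simp: mem_cube_iff dist_norm norm_minus_commute abs_le_iff) (smt (verit))+
  moreover have "f z = 0" if "z \<notin> cube x R" for z
  proof -
    have "\<not> norm (z - x) \<le> R"
      using that mem_cube_if_norm_le by blast
    then show ?thesis
      using R by (simp add: f_def bump_eq_0)
  qed
  ultimately show ?thesis
    unfolding f_def by (blast intro: has_integral_on_superset)
qed

lemma bump_translate_has_real_derivative:
  fixes z x e :: "real^'n"
  assumes R: "R > 0"
  shows "((\<lambda>t. bump ((1/R) *\<^sub>R (z - (x + t *\<^sub>R e)))) has_real_derivative
    bump_grad ((1/R) *\<^sub>R (z - (x + t *\<^sub>R e))) \<bullet> ((-1/R) *\<^sub>R e)) (at t)"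
proof -
  have "((\<lambda>t. (1/R) *\<^sub>R (z - (x + t *\<^sub>R e))) has_derivative (\<lambda>s. s *\<^sub>R ((-1/R) *\<^sub>R e))) (at t)"
    using R by (auto intro!: derivative_eq_intros simp: fun_eq_iff algebra_simps)
  from diff_chain_at[OF this bump_has_derivative]
  show ?thesis
    unfolding has_field_derivative_def o_def by (rule has_derivative_eq_rhs) (simp add: fun_eq_iff)
qed

lemma has_field_derivative_bump_kernel_integral:
  fixes h :: "real^'n \<Rightarrow> real"
  assumes h_cont: "continuous_on (cube c s) h" and R: "R > 0"
  shows "((\<lambda>t. integral (cube c s) (\<lambda>z. h z * bump ((1/R) *\<^sub>R (z - (x + t *\<^sub>R e)))))
    has_field_derivative - integral (cube c s) (\<lambda>z. h z * (bump_grad ((1/R) *\<^sub>R (z - x)) \<bullet> e)) / R)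
    (at 0)"
proof -
  define w where "w = (-1/R) *\<^sub>R e"
  have "((\<lambda>t. integral (cube c s) (\<lambda>z. h z * bump ((1/R) *\<^sub>R (z - (x + t *\<^sub>R e))))) has_field_derivative
      integral (cube c s) (\<lambda>z. h z * (bump_grad ((1/R) *\<^sub>R (z - (x + 0 *\<^sub>R e))) \<bullet> w)))
      (at 0 within {-1..1})"
    unfolding cube_def
  proof (rule leibniz_rule_field_derivative)
    fix t :: real and z :: "real^'n"
    from DERIV_cmult[OF bump_translate_has_real_derivative[OF R], of "h z" z x e t]
    show "((\<lambda>t. h z * bump ((1/R) *\<^sub>R (z - (x + t *\<^sub>R e)))) has_field_derivative
        h z * (bump_grad ((1/R) *\<^sub>R (z - (x + t *\<^sub>R e))) \<bullet> w)) (at t within {-1..1})"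
      unfolding w_def by (rule has_field_derivative_at_within)
  next
    fix t :: real
    show "(\<lambda>z. h z * bump ((1/R) *\<^sub>R (z - (x + t *\<^sub>R e)))) integrable_on cbox (c - s *\<^sub>R 1) (c + s *\<^sub>R 1)"
      using h_cont unfolding cube_def
      by (intro integrable_continuous continuous_intros continuous_on_compose2[OF continuous_on_bump]) auto
  next
    have "continuous_on ({-1..1} \<times> cube c s) (\<lambda>p. h (snd p))"
      by (rule continuous_on_compose2[OF h_cont]) (auto intro!: continuous_intros)
    moreover have "continuous_on ({-1..1} \<times> cube c s)
        (\<lambda>p. bump_grad ((1/R) *\<^sub>R (snd p - (x + fst p *\<^sub>R e))))"
      by (rule continuous_on_compose2[OF continuous_on_bump_grad]) (auto intro!: continuous_intros)
    ultimately show "continuous_on ({-1..1} \<times> cbox (c - s *\<^sub>R 1) (c + s *\<^sub>R 1))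
        (\<lambda>(t, z). h z * (bump_grad ((1/R) *\<^sub>R (z - (x + t *\<^sub>R e))) \<bullet> w))"
      unfolding split_def cube_def by (intro continuous_intros)
  qed auto
  moreover have "at (0::real) within {-1..1} = at 0"
    by (rule at_within_interior) simp
  moreover have "(\<lambda>z. h z * (bump_grad ((1/R) *\<^sub>R (z - x)) \<bullet> w))
      = (\<lambda>z. (-1/R) * (h z * (bump_grad ((1/R) *\<^sub>R (z - x)) \<bullet> e)))"
    by (simp add: w_def fun_eq_iff)
  ultimately show ?thesis
    unfolding integral_mult_right by simp
qed

definition bump_kernel_deriv ::
    "(real^'n \<Rightarrow> real) \<Rightarrow> real^'n \<Rightarrow> real \<Rightarrow> real^'n \<Rightarrow> real^'n \<Rightarrow> real" where
  "bump_kernel_deriv h x0 R e x =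
    - integral (cube x0 (2 * R)) (\<lambda>z. h z * (bump_grad ((1/R) *\<^sub>R (z - x)) \<bullet> e))
      / (bump_mass TYPE('n) * R ^ (CARD('n) + 1))"

lemma has_real_derivative_bump_kernel_deriv:
  fixes h :: "real^'n \<Rightarrow> real"
  assumes mv: "bump_mean_value_on A h" and R: "R > 0"
    and sub: "cball x0 (2 * R * real CARD('n)) \<subseteq> A"
    and e: "norm e \<le> 1" and x: "x \<in> ball x0 (R/2)"
  shows "((\<lambda>t. h (x + t *\<^sub>R e)) has_real_derivative bump_kernel_deriv h x0 R e x) (at 0)"
proof -
  let ?K = "cube x0 (2 * R)"
  let ?c = "bump_mass TYPE('n) * R ^ CARD('n)"
  have "?c > 0"
    using R bump_mass_pos[where 'n='n] by simp
  have "?K \<subseteq> A"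
    by (rule subset_trans[OF cube_subset_cball_card sub])
  then have "continuous_on ?K h"
    by (rule continuous_on_subset[OF bump_mean_value_on_imp_continuous_on[OF mv]])
  from has_field_derivative_bump_kernel_integral[OF this R, of x e]
  have "((\<lambda>t. integral ?K (\<lambda>z. h z * bump ((1/R) *\<^sub>R (z - (x + t *\<^sub>R e)))) / ?c)
      has_field_derivative bump_kernel_deriv h x0 R e x) (at 0)"
    using R by (auto dest: DERIV_cdivide[where c="?c"] simp: bump_kernel_deriv_def field_simps)
  then show ?thesis
  proof (rule has_field_derivative_transform_within_open[where S="ball 0 (R/2)"])
    fix t :: real
    assume "t \<in> ball 0 (R/2)"
    then have "norm (t *\<^sub>R e) < R/2"
      using e mult_left_le[of "norm e" "\<bar>t\<bar>"] by simp
    then have "x + t *\<^sub>R e \<in> ball x0 R"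
      using x dist_triangle[of x0 "x + t *\<^sub>R e" x] by (simp add: dist_norm)
    from integral_unique[OF has_integral_bump_kernel[OF mv R sub this]] \<open>?c > 0\<close> R
    show "integral ?K (\<lambda>z. h z * bump ((1/R) *\<^sub>R (z - (x + t *\<^sub>R e)))) / ?c = h (x + t *\<^sub>R e)"
      by (simp add: bump_mass_pos[where 'n='n, THEN less_imp_neq, symmetric])
  qed (use R in auto)
qed

definition dir_deriv :: "(real^'n \<Rightarrow> real) \<Rightarrow> real^'n \<Rightarrow> real^'n \<Rightarrow> real" where
  "dir_deriv h e x = deriv (\<lambda>t. h (x + t *\<^sub>R e)) 0"

lemma dir_deriv_eq_bump_kernel_deriv:
  fixes h :: "real^'n \<Rightarrow> real"
  assumes "bump_mean_value_on A h" "R > 0" "cball x0 (2 * R * real CARD('n)) \<subseteq> A"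
    and "norm e \<le> 1" "x \<in> ball x0 (R/2)"
  shows "dir_deriv h e x = bump_kernel_deriv h x0 R e x"
  unfolding dir_deriv_def by (rule DERIV_imp_deriv[OF has_real_derivative_bump_kernel_deriv[OF assms]])

lemma has_real_derivative_dir_deriv:
  fixes h :: "real^'n \<Rightarrow> real"
  assumes mv: "bump_mean_value_on A h" and A: "open A" and e: "norm e \<le> 1" and x: "x \<in> A"
  shows "((\<lambda>t. h (x + t *\<^sub>R e)) has_real_derivative dir_deriv h e x) (at 0)"
proof -
  obtain R where R: "R > 0" "cball x (2 * R * real CARD('n)) \<subseteq> A"
    using open_obtain_cball_card_subset[OF A x] .
  then have "x \<in> ball x (R/2)"
    by simp
  then show ?thesis
    using has_real_derivative_bump_kernel_deriv[OF mv R e] dir_deriv_eq_bump_kernel_deriv[OF mv R e]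
    by simp
qed

lemma has_real_derivative_dir_deriv_along_line:
  fixes h :: "real^'n \<Rightarrow> real"
  assumes mv: "bump_mean_value_on A h" and A: "open A" and e: "norm e \<le> 1"
    and p: "p + t *\<^sub>R e \<in> A"
  shows "((\<lambda>s. h (p + s *\<^sub>R e)) has_real_derivative dir_deriv h e (p + t *\<^sub>R e)) (at t)"
proof -
  have "(\<lambda>s. h (p + (s + t) *\<^sub>R e)) = (\<lambda>s. h (p + t *\<^sub>R e + s *\<^sub>R e))"
    by (simp add: scaleR_add_left add_ac)
  with has_real_derivative_dir_deriv[OF mv A e p]
  have "((\<lambda>s. h (p + (s + t) *\<^sub>R e)) has_real_derivative dir_deriv h e (p + t *\<^sub>R e)) (at 0)"
    by (simp only:)
  then have "((\<lambda>s. h (p + s *\<^sub>R e)) has_real_derivative dir_deriv h e (p + t *\<^sub>R e)) (at (0 + t))"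
    by (rule DERIV_shift[THEN iffD2])
  then show ?thesis
    by simp
qed

lemma continuous_on_bump_kernel_deriv:
  fixes h :: "real^'n \<Rightarrow> real"
  assumes h_cont: "continuous_on (cube x0 (2 * R)) h" and R: "R > 0"
  shows "continuous_on U (bump_kernel_deriv h x0 R e)"
proof -
  have "continuous_on (U \<times> cube x0 (2 * R)) (\<lambda>p. h (snd p))"
    by (rule continuous_on_compose2[OF h_cont]) (auto intro!: continuous_intros)
  moreover have "continuous_on (U \<times> cube x0 (2 * R)) (\<lambda>p. bump_grad ((1/R) *\<^sub>R (snd p - fst p)))"
    by (rule continuous_on_compose2[OF continuous_on_bump_grad]) (auto intro!: continuous_intros)
  ultimately have "continuous_on (U \<times> cube x0 (2 * R))
      (\<lambda>(x, z). h z * (bump_grad ((1/R) *\<^sub>R (z - x)) \<bullet> e))"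
    unfolding split_def by (intro continuous_intros)
  then have "continuous_on U
      (\<lambda>x. integral (cube x0 (2 * R)) (\<lambda>z. h z * (bump_grad ((1/R) *\<^sub>R (z - x)) \<bullet> e)))"
    unfolding cube_def by (rule integral_continuous_on_param)
  then show ?thesis
    unfolding bump_kernel_deriv_def[abs_def]
    using R bump_mass_pos[where 'n='n] by (intro continuous_intros) auto
qed

lemma continuous_on_dir_deriv:
  fixes h :: "real^'n \<Rightarrow> real"
  assumes mv: "bump_mean_value_on A h" and A: "open A" and e: "norm e \<le> 1"
  shows "continuous_on A (dir_deriv h e)"
proof (intro continuous_at_imp_continuous_on ballI)
  fix x0
  assume "x0 \<in> A"
  then obtain R where R: "R > 0" "cball x0 (2 * R * real CARD('n)) \<subseteq> A"
    using open_obtain_cball_card_subset[OF A] by blast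
  then have "continuous_on (cube x0 (2 * R)) h"
    using cube_subset_cball_card[of x0 "2 * R"]
    by (intro continuous_on_subset[OF bump_mean_value_on_imp_continuous_on[OF mv]]) auto
  from continuous_on_bump_kernel_deriv[OF this R(1)]
  have "continuous_on (ball x0 (R/2)) (dir_deriv h e)"
    by (rule continuous_on_eq) (use dir_deriv_eq_bump_kernel_deriv[OF mv R e] in auto)
  then show "isCont (dir_deriv h e) x0"
    using R(1) by (simp add: continuous_on_eq_continuous_at)
qed

definition cauchy_const :: "'n::finite itself \<Rightarrow> real" where
  "cauchy_const _ = 4 ^ (CARD('n) + 1) / bump_mass TYPE('n)"

lemma cauchy_const_pos: "cauchy_const TYPE('n::finite) > 0"
  using bump_mass_pos[where 'n='n] by (simp add: cauchy_const_def)

lemma abs_integral_bump_grad_kernel_le: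
  fixes h :: "real^'n \<Rightarrow> real"
  assumes h_cont: "continuous_on (cube x0 (2 * R)) h" and R: "R > 0" and e: "norm e \<le> 1"
    and M: "\<And>z. z \<in> cube x0 (2 * R) \<Longrightarrow> \<bar>h z\<bar> \<le> M"
  shows "\<bar>integral (cube x0 (2 * R)) (\<lambda>z. h z * (bump_grad ((1/R) *\<^sub>R (z - x)) \<bullet> e))\<bar>
    \<le> 4 * M * (4 * R) ^ CARD('n)"
proof -
  let ?K = "cube x0 (2 * R)"
  let ?f = "\<lambda>z. h z * (bump_grad ((1/R) *\<^sub>R (z - x)) \<bullet> e)"
  have "?K \<noteq> {}"
    using center_mem_cube[of "2 * R" x0] R by auto
  then have content: "Henstock_Kurzweil_Integration.content ?K = (4 * R) ^ CARD('n)"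
    by (simp add: cube_def content_cbox_cart)
  have "M \<ge> 0"
    using M[of x0] center_mem_cube[of "2 * R" x0] R by auto
  have "?f integrable_on ?K"
    using h_cont unfolding cube_def
    by (intro integrable_continuous continuous_intros continuous_on_compose2[OF continuous_on_bump_grad]) auto
  moreover have "norm (?f z) \<le> 4 * M" if "z \<in> ?K" for z
  proof -
    have "\<bar>bump_grad ((1/R) *\<^sub>R (z - x)) \<bullet> e\<bar> \<le> norm (bump_grad ((1/R) *\<^sub>R (z - x))) * norm e"
      by (rule Cauchy_Schwarz_ineq2)
    also have "\<dots> \<le> 4 * 1"
      using norm_bump_grad_le e by (intro mult_mono) auto
    finally have "\<bar>bump_grad ((1/R) *\<^sub>R (z - x)) \<bullet> e\<bar> \<le> 4"
      by simp
    then show ?thesis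
      using M[OF that] \<open>M \<ge> 0\<close> by (simp add: abs_mult mult.commute mult_mono)
  qed
  ultimately have "norm (integral ?K ?f) \<le> 4 * M * Henstock_Kurzweil_Integration.content ?K"
    unfolding cube_def by (intro has_integral_bound[OF _ integrable_integral]) (use \<open>M \<ge> 0\<close> in auto)
  then show ?thesis
    by (simp add: content)
qed

lemma abs_dir_deriv_le:
  fixes h :: "real^'n \<Rightarrow> real"
  assumes mv: "bump_mean_value_on A h" and R: "R > 0"
    and sub: "cball x0 (2 * R * real CARD('n)) \<subseteq> A"
    and e: "norm e \<le> 1" and M: "\<And>z. z \<in> cball x0 (2 * R * real CARD('n)) \<Longrightarrow> \<bar>h z\<bar> \<le> M"
  shows "\<bar>dir_deriv h e x0\<bar> \<le> cauchy_const TYPE('n) * M / R"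
proof -
  let ?N = "CARD('n)"
  let ?f = "\<lambda>z. h z * (bump_grad ((1/R) *\<^sub>R (z - x0)) \<bullet> e)"
  have K_sub: "cube x0 (2 * R) \<subseteq> cball x0 (2 * R * real CARD('n))"
    by (rule cube_subset_cball_card)
  have mass: "bump_mass TYPE('n) > 0"
    by (rule bump_mass_pos)
  have "continuous_on (cube x0 (2 * R)) h"
    using K_sub sub by (intro continuous_on_subset[OF bump_mean_value_on_imp_continuous_on[OF mv]]) auto
  from abs_integral_bump_grad_kernel_le[OF this R e, of M x0]
  have bound: "\<bar>integral (cube x0 (2 * R)) ?f\<bar> \<le> 4 * M * (4 * R) ^ ?N"
    using M K_sub by blast
  have "x0 \<in> ball x0 (R/2)"
    using R by simp
  then have "\<bar>dir_deriv h e x0\<bar> = \<bar>integral (cube x0 (2 * R)) ?f\<bar> / (bump_mass TYPE('n) * R ^ (?N + 1))"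
    using dir_deriv_eq_bump_kernel_deriv[OF mv R sub e] mass R
    by (simp add: bump_kernel_deriv_def abs_divide abs_mult)
  also have "\<dots> \<le> 4 * M * (4 * R) ^ ?N / (bump_mass TYPE('n) * R ^ (?N + 1))"
    using mass R by (intro divide_right_mono bound) auto
  also have "\<dots> = cauchy_const TYPE('n) * M / R"
    using mass R by (simp add: cauchy_const_def field_simps power_mult_distrib)
  finally show ?thesis .
qed

lemma has_field_derivative_bump_average_shift:
  fixes h :: "real^'n \<Rightarrow> real"
  assumes mv: "bump_mean_value_on A h" and A: "open A" and e: "norm e \<le> 1" and \<delta>: "\<delta> > 0"
    and in_A: "\<And>t y. t \<in> {-\<delta>..\<delta>} \<Longrightarrow> y \<in> cbox (-1) 1 \<Longrightarrow> a + R *\<^sub>R y + t *\<^sub>R e \<in> A"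
  shows "((\<lambda>t. integral (cbox (-1) 1) (\<lambda>y. h (a + R *\<^sub>R y + t *\<^sub>R e) * bump y)) has_field_derivative
      integral (cbox (-1) 1) (\<lambda>y. dir_deriv h e (a + R *\<^sub>R y) * bump y)) (at 0)"
proof -
  let ?C = "cbox (-1) (1::real^'n)"
  have h_cont: "continuous_on A h"
    by (rule bump_mean_value_on_imp_continuous_on[OF mv])
  have D_cont: "continuous_on A (dir_deriv h e)"
    by (rule continuous_on_dir_deriv[OF mv A e])
  have "((\<lambda>t. integral ?C (\<lambda>y. h (a + R *\<^sub>R y + t *\<^sub>R e) * bump y)) has_field_derivative
      integral ?C (\<lambda>y. dir_deriv h e (a + R *\<^sub>R y + 0 *\<^sub>R e) * bump y)) (at 0 within {-\<delta>..\<delta>})"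
  proof (rule leibniz_rule_field_derivative)
    fix t :: real and y :: "real^'n"
    assume "t \<in> {-\<delta>..\<delta>}" "y \<in> ?C"
    from has_real_derivative_dir_deriv_along_line[OF mv A e in_A[OF this]]
    have "((\<lambda>s. h (a + R *\<^sub>R y + s *\<^sub>R e) * bump y) has_field_derivative
        dir_deriv h e (a + R *\<^sub>R y + t *\<^sub>R e) * bump y) (at t)"
      by (rule DERIV_cmult_right)
    then show "((\<lambda>s. h (a + R *\<^sub>R y + s *\<^sub>R e) * bump y) has_field_derivative
        dir_deriv h e (a + R *\<^sub>R y + t *\<^sub>R e) * bump y) (at t within {-\<delta>..\<delta>})"
      by (rule has_field_derivative_at_within)
  next
    fix t :: real
    assume "t \<in> {-\<delta>..\<delta>}"
    then have "continuous_on ?C (\<lambda>y. h (a + R *\<^sub>R y + t *\<^sub>R e))"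
      by (intro continuous_on_compose2[OF h_cont]) (use in_A in \<open>auto intro!: continuous_intros\<close>)
    then show "(\<lambda>y. h (a + R *\<^sub>R y + t *\<^sub>R e) * bump y) integrable_on ?C"
      by (intro integrable_continuous continuous_intros continuous_on_bump)
  next
    have "continuous_on ({-\<delta>..\<delta>} \<times> ?C) (\<lambda>p. dir_deriv h e (a + R *\<^sub>R snd p + fst p *\<^sub>R e))"
      by (rule continuous_on_compose2[OF D_cont]) (use in_A in \<open>auto intro!: continuous_intros\<close>)
    moreover have "continuous_on ({-\<delta>..\<delta>} \<times> ?C) (\<lambda>p. bump (snd p))"
      by (rule continuous_on_compose2[OF continuous_on_bump]) (auto intro!: continuous_intros)
    ultimately show "continuous_on ({-\<delta>..\<delta>} \<times> ?C)
        (\<lambda>(t, y). dir_deriv h e (a + R *\<^sub>R y + t *\<^sub>R e) * bump y)"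
      unfolding split_def by (intro continuous_intros)
  qed (use \<delta> in auto)
  moreover have "at (0::real) within {-\<delta>..\<delta>} = at 0"
    by (rule at_within_interior) (use \<delta> in simp)
  ultimately show ?thesis
    by simp
qed

lemma open_obtain_shifted_cball_subset:
  fixes a e :: "real^'n"
  assumes A: "open A" and sub: "cball a \<rho> \<subseteq> A" and e: "norm e \<le> 1"
  obtains \<delta> where "\<delta> > 0" "\<And>t. t \<in> {-\<delta>..\<delta>} \<Longrightarrow> cball (a + t *\<^sub>R e) \<rho> \<subseteq> A"
proof -
  obtain \<delta> where \<delta>: "\<delta> > 0" "(\<Union>x\<in>cball a \<rho>. cball x \<delta>) \<subseteq> A"
    using compact_subset_open_imp_cball_epsilon_subset[OF compact_cball A sub] by blast
  have "cball (a + t *\<^sub>R e) \<rho> \<subseteq> A" if "t \<in> {-\<delta>..\<delta>}" for t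
  proof
    fix z
    assume "z \<in> cball (a + t *\<^sub>R e) \<rho>"
    then have "z - t *\<^sub>R e \<in> cball a \<rho>"
      by (simp add: dist_norm algebra_simps)
    moreover have "norm (t *\<^sub>R e) \<le> \<delta>"
      using that e mult_left_le[of "norm e" "\<bar>t\<bar>"] by auto
    ultimately show "z \<in> A"
      using \<delta>(2) by (force simp: dist_norm)
  qed
  with \<delta>(1) show ?thesis
    using that by blast
qed

lemma bump_mean_value_on_dir_deriv:
  fixes h :: "real^'n \<Rightarrow> real"
  assumes mv: "bump_mean_value_on A h" and A: "open A" and e: "norm e \<le> 1"
  shows "bump_mean_value_on A (dir_deriv h e)"
  unfolding bump_mean_value_on_def
proof (intro conjI allI impI)
  show "continuous_on A (dir_deriv h e)"
    by (rule continuous_on_dir_deriv[OF mv A e])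
  fix a :: "real^'n" and R :: real
  assume R: "0 < R" and sub: "cball a (R * real CARD('n)) \<subseteq> A"
  let ?C = "cbox (-1) (1::real^'n)"
  obtain \<delta> where \<delta>: "\<delta> > 0"
    and shift_sub: "\<And>t. t \<in> {-\<delta>..\<delta>} \<Longrightarrow> cball (a + t *\<^sub>R e) (R * real CARD('n)) \<subseteq> A"
    using open_obtain_shifted_cball_subset[OF A sub e] by blast
  have in_A: "a + R *\<^sub>R y + t *\<^sub>R e \<in> A" if "t \<in> {-\<delta>..\<delta>}" "y \<in> ?C" for t y
    using scaled_unit_cube_subset[OF shift_sub[OF that(1)] _ order_refl that(2)] R by (simp add: add_ac)
  have "integral ?C (\<lambda>y. h (a + R *\<^sub>R y + t *\<^sub>R e) * bump y) = bump_mass TYPE('n) * h (a + t *\<^sub>R e)"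
    if "t \<in> {-\<delta>..\<delta>}" for t
    using bump_mean_value_onD_integral[OF mv R shift_sub[OF that]] by (simp add: add_ac mult.commute)
  then have "((\<lambda>t. integral ?C (\<lambda>y. h (a + R *\<^sub>R y + t *\<^sub>R e) * bump y)) has_field_derivative
      bump_mass TYPE('n) * dir_deriv h e a) (at 0)"
    using \<delta> sub R
    by (intro has_field_derivative_transform_within_open[where S="{-\<delta><..<\<delta>}",
          OF DERIV_cmult[OF has_real_derivative_dir_deriv[OF mv A e]]]) auto
  with has_field_derivative_bump_average_shift[OF mv A e \<delta> in_A]
  show "integral ?C (\<lambda>y. dir_deriv h e (a + R *\<^sub>R y) * bump y) = dir_deriv h e a * bump_mass TYPE('n)"
    using DERIV_unique by (simp add: mult.commute)
qed

text \<open>The weighted mean of the nonnegative \<open>h\<close> over a small ball about \<open>x0\<close> is \<open>h x0 = 0\<close>,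
  while the weight is positive.\<close>
lemma bump_mean_value_eq_0_near_zero_min:
  fixes h :: "real^'n \<Rightarrow> real"
  assumes mv: "bump_mean_value_on A h" and r: "r > 0" and ball: "ball x0 r \<subseteq> A"
    and nonneg: "\<And>x. x \<in> ball x0 r \<Longrightarrow> h x \<ge> 0" and h0: "h x0 = 0"
  obtains R where "R > 0" "\<forall>z\<in>ball x0 R. h z = 0"
proof -
  let ?K = "real CARD('n)"
  let ?C = "cbox (-1) (1::real^'n)"
  define R where "R = r / (2 * ?K)"
  have R: "R > 0" and RK: "R * ?K = r / 2"
    using r by (auto simp: R_def)
  have in_ball: "x0 + R *\<^sub>R y \<in> ball x0 r" if "y \<in> ?C" for y
    using scaled_unit_cube_subset[of x0 R "ball x0 r" R y] RK r R that by (auto simp: subset_iff)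
  have cont: "continuous_on ?C (\<lambda>y. h (x0 + R *\<^sub>R y) * bump y)"
    using in_ball ball
    by (intro continuous_intros continuous_on_bump
        continuous_on_compose_affine[OF bump_mean_value_on_imp_continuous_on[OF mv]]) auto
  have "cball x0 (R * ?K) \<subseteq> A"
    using RK ball r by (force simp: subset_iff)
  then have int: "((\<lambda>y. h (x0 + R *\<^sub>R y) * bump y) has_integral 0) ?C"
    using bump_mean_value_onD_integral[OF mv R, of x0] h0 integrable_continuous[OF cont]
    by (metis integrable_integral mult_zero_left)
  have "(0::real^'n) \<in> box (-1) 1"
    by (simp add: mem_box_cart)
  then have zero: "h (x0 + R *\<^sub>R y) * bump y = 0" if "y \<in> ?C" for y
    using nonneg[OF in_ball] box_subset_cbox bump_nonneg
    by (intro has_integral_0_cbox_imp_0[OF cont _ int _ that]) (auto intro!: mult_nonneg_nonneg)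
  show ?thesis
  proof (intro that[OF R] ballI)
    fix z
    assume "z \<in> ball x0 R"
    then have "norm ((1/R) *\<^sub>R (z - x0)) < 1"
      using R by (simp add: dist_norm norm_minus_commute)
    then show "h z = 0"
      using zero[OF mem_unit_cube_if_norm_le, of "(1/R) *\<^sub>R (z - x0)"]
        bump_pos[of "(1/R) *\<^sub>R (z - x0)"] R by simp
  qed
qed

section \<open>Cauchy estimates and unique continuation\<close>

definition iter_dir_deriv :: "(real^'n \<Rightarrow> real) \<Rightarrow> real^'n \<Rightarrow> nat \<Rightarrow> real^'n \<Rightarrow> real" where
  "iter_dir_deriv h e k = ((\<lambda>f. dir_deriv f e) ^^ k) h"

lemma iter_dir_deriv_0 [simp]: "iter_dir_deriv h e 0 = h"
  by (simp add: iter_dir_deriv_def)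

lemma iter_dir_deriv_Suc: "iter_dir_deriv h e (Suc k) = dir_deriv (iter_dir_deriv h e k) e"
  by (simp add: iter_dir_deriv_def)

lemma bump_mean_value_on_iter_dir_deriv:
  fixes h :: "real^'n \<Rightarrow> real"
  assumes "bump_mean_value_on A h" "open A" "norm e \<le> 1"
  shows "bump_mean_value_on A (iter_dir_deriv h e k)"
  by (induction k) (simp_all add: assms iter_dir_deriv_Suc bump_mean_value_on_dir_deriv)

text \<open>Cauchy estimates: the \<open>j\<close>-th derivative is bounded on the ball whose radius has shrunk by
  \<open>j\<close> steps of size \<open>2 s CARD('n)\<close>, each step costing a factor \<open>C / s\<close>.\<close>
lemma abs_iter_dir_deriv_le_shrinking_balls:
  fixes h :: "real^'n \<Rightarrow> real"
  assumes mv: "bump_mean_value_on A h" and A: "open A" and e: "norm e \<le> 1" and s: "s > 0"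
    and sub: "cball x (2 * real k * s * real CARD('n)) \<subseteq> A"
    and M: "\<And>z. z \<in> cball x (2 * real k * s * real CARD('n)) \<Longrightarrow> \<bar>h z\<bar> \<le> M"
  shows "j \<le> k \<Longrightarrow> z \<in> cball x (2 * (real k - real j) * s * real CARD('n)) \<Longrightarrow>
    \<bar>iter_dir_deriv h e j z\<bar> \<le> (cauchy_const TYPE('n) / s) ^ j * M"
proof (induction j arbitrary: z)
  case 0
  then show ?case
    using M by simp
next
  case (Suc j)
  let ?K = "real CARD('n)"
  have near: "w \<in> cball x (2 * (real k - real j) * s * ?K)" if "w \<in> cball z (2 * s * ?K)" for w
  proof -
    have "dist x w \<le> dist x z + dist z w"
      by (rule dist_triangle)
    also have "\<dots> \<le> 2 * (real k - real (Suc j)) * s * ?K + 2 * s * ?K"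
      using Suc.prems(2) that by (intro add_mono) auto
    finally show ?thesis
      by (simp add: algebra_simps)
  qed
  have "2 * (real k - real j) * s * ?K \<le> 2 * real k * s * ?K"
    using s by (intro mult_right_mono) auto
  then have "cball z (2 * s * ?K) \<subseteq> A"
    using near sub by (meson cball_subset_cball_iff order_trans subsetI subsetD dual_order.refl mem_cball)
  from abs_dir_deriv_le[OF bump_mean_value_on_iter_dir_deriv[OF mv A e] s this e]
  have "\<bar>dir_deriv (iter_dir_deriv h e j) e z\<bar>
      \<le> cauchy_const TYPE('n) * ((cauchy_const TYPE('n) / s) ^ j * M) / s"
    using Suc near by simp
  also have "\<dots> = (cauchy_const TYPE('n) / s) ^ Suc j * M"
    using s by (simp add: field_simps)
  finally show ?case
    by (simp add: iter_dir_deriv_Suc)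
qed

lemma abs_iter_dir_deriv_le:
  fixes h :: "real^'n \<Rightarrow> real"
  assumes mv: "bump_mean_value_on A h" and A: "open A" and e: "norm e \<le> 1" and r: "r > 0"
    and sub: "cball x (2 * r * real CARD('n)) \<subseteq> A"
    and M: "\<And>z. z \<in> cball x (2 * r * real CARD('n)) \<Longrightarrow> \<bar>h z\<bar> \<le> M"
  shows "\<bar>iter_dir_deriv h e k x\<bar> \<le> (cauchy_const TYPE('n) * real k / r) ^ k * M"
proof (cases "k = 0")
  case True
  then show ?thesis
    using M[of x] r by simp
next
  case False
  define s where "s = r / real k"
  have s: "s > 0" and ks: "real k * s = r"
    using r False by (auto simp: s_def)
  have "\<bar>iter_dir_deriv h e k x\<bar> \<le> (cauchy_const TYPE('n) / s) ^ k * M"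
    using abs_iter_dir_deriv_le_shrinking_balls[OF mv A e s, where k=k and j=k and z=x] sub M
    by (simp add: ks mult.assoc)
  moreover have "cauchy_const TYPE('n) / s = cauchy_const TYPE('n) * real k / r"
    using False r by (simp add: s_def field_simps)
  ultimately show ?thesis
    by simp
qed

lemma iter_dir_deriv_eq_0_on_ball:
  fixes h :: "real^'n \<Rightarrow> real"
  assumes "\<forall>w\<in>ball z \<epsilon>. h w = 0" and e: "norm e \<le> 1"
  shows "\<forall>w\<in>ball z \<epsilon>. iter_dir_deriv h e k w = 0"
proof (induction k)
  case 0
  then show ?case
    using assms by simp
next
  case (Suc k)
  show ?case
  proof
    fix w
    assume w: "w \<in> ball z \<epsilon>"
    have "((\<lambda>t. iter_dir_deriv h e k (w + t *\<^sub>R e)) has_real_derivative 0) (at 0)"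
    proof (rule has_field_derivative_transform_within_open[OF DERIV_const, where S="ball 0 (\<epsilon> - dist z w)"])
      fix t :: real
      assume t: "t \<in> ball 0 (\<epsilon> - dist z w)"
      have "norm (t *\<^sub>R e) \<le> \<bar>t\<bar>"
        using e by (simp add: mult_left_le)
      then have "dist z (w + t *\<^sub>R e) < \<epsilon>"
        using t dist_triangle[of z "w + t *\<^sub>R e" w] by (simp add: dist_norm)
      then show "0 = iter_dir_deriv h e k (w + t *\<^sub>R e)"
        using Suc by simp
    qed (use w in auto)
    then show "iter_dir_deriv h e (Suc k) w = 0"
      by (simp add: iter_dir_deriv_Suc dir_deriv_def DERIV_imp_deriv)
  qed
qed

lemma power_div_fact_le_exp:
  assumes "0 \<le> (x::real)"
  shows "x ^ n / fact n \<le> exp x"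
proof -
  have "x ^ n / fact n \<le> (\<Sum>m<Suc n. x ^ m / fact m)"
    using assms by (simp add: sum_nonneg)
  also have "\<dots> \<le> (\<Sum>m. x ^ m / fact m)"
    using summable_exp[of x] assms by (intro sum_le_suminf) (auto simp: divide_inverse mult.commute)
  also have "\<dots> = exp x"
    by (simp add: exp_def divide_inverse mult.commute)
  finally show ?thesis .
qed

text \<open>Taylor's formula with Lagrange remainder, the Cauchy estimates and \<open>k^k / k! \<le> e^k\<close>.\<close>
lemma abs_along_line_le_half_power:
  fixes h :: "real^'n \<Rightarrow> real"
  assumes mv: "bump_mean_value_on A h" and A: "open A" and e: "norm e \<le> 1" and \<tau>: "\<tau> > 0"
    and path: "\<And>s. s \<in> {0..\<tau>} \<Longrightarrow> z + s *\<^sub>R e \<in> A"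
    and zero: "\<And>k. iter_dir_deriv h e k z = 0"
    and bound: "\<And>k s. s \<in> {0..\<tau>} \<Longrightarrow> \<bar>iter_dir_deriv h e k (z + s *\<^sub>R e)\<bar> \<le> (C * real k / r) ^ k * M"
    and C: "C > 0" and r: "r > 0" and small: "2 * C * \<tau> * exp 1 \<le> r" and k: "k > 0"
  shows "\<bar>h (z + \<tau> *\<^sub>R e)\<bar> \<le> M * (1/2) ^ k"
proof -
  define D where "D m s = iter_dir_deriv h e m (z + s *\<^sub>R e)" for m s
  have M: "M \<ge> 0"
    using bound[of 0 0] \<tau> by simp
  have "\<forall>m t. m < k \<and> 0 \<le> t \<and> t \<le> \<tau> \<longrightarrow> DERIV (D m) t :> D (Suc m) t"
    unfolding D_def[abs_def] iter_dir_deriv_Suc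
    using has_real_derivative_dir_deriv_along_line[OF bump_mean_value_on_iter_dir_deriv[OF mv A e] A e path]
    by simp
  from Maclaurin[OF \<tau> k _ this] obtain t where t: "0 < t" "t < \<tau>"
    "D 0 \<tau> = (\<Sum>m<k. D m 0 / fact m * \<tau> ^ m) + D k t / fact k * \<tau> ^ k"
    by auto
  then have "\<bar>h (z + \<tau> *\<^sub>R e)\<bar> = \<bar>D k t\<bar> / fact k * \<tau> ^ k"
    using \<tau> by (simp add: D_def zero abs_mult)
  also have "\<dots> \<le> (C * real k / r) ^ k * M / fact k * \<tau> ^ k"
    using bound[of t k] t \<tau> by (simp add: D_def divide_right_mono mult_right_mono)
  also have "\<dots> = M * (C * \<tau> / r) ^ k * (real k ^ k / fact k)"
    by (simp add: field_simps power_mult_distrib power_divide)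
  also have "\<dots> \<le> M * (C * \<tau> / r) ^ k * exp (real k)"
    using M C \<tau> r power_div_fact_le_exp[of "real k" k] by (intro mult_left_mono) auto
  also have "\<dots> = M * (C * \<tau> * exp 1 / r) ^ k"
    using exp_of_nat_mult[of k "1::real"] by (simp add: power_mult_distrib field_simps)
  also have "\<dots> \<le> M * (1/2) ^ k"
    using small r C \<tau> M by (intro mult_left_mono power_mono) (auto simp: field_simps)
  finally show ?thesis .
qed

lemma eq_0_if_iter_dir_deriv_eq_0:
  fixes h :: "real^'n \<Rightarrow> real"
  assumes "bump_mean_value_on A h" "open A" "norm e \<le> 1" "\<tau> > 0"
    and "\<And>s. s \<in> {0..\<tau>} \<Longrightarrow> z + s *\<^sub>R e \<in> A"
    and "\<And>k. iter_dir_deriv h e k z = 0"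
    and "\<And>k s. s \<in> {0..\<tau>} \<Longrightarrow> \<bar>iter_dir_deriv h e k (z + s *\<^sub>R e)\<bar> \<le> (C * real k / r) ^ k * M"
    and "C > 0" "r > 0" "2 * C * \<tau> * exp 1 \<le> r"
  shows "h (z + \<tau> *\<^sub>R e) = 0"
proof -
  have "(\<lambda>k. M * (1/2::real) ^ Suc k) \<longlonglongrightarrow> 0"
    by (intro tendsto_mult_right_zero LIMSEQ_Suc LIMSEQ_realpow_zero) auto
  then have "\<bar>h (z + \<tau> *\<^sub>R e)\<bar> \<le> 0"
    by (rule LIMSEQ_le_const) (use abs_along_line_le_half_power[OF assms] in blast)
  then show ?thesis
    by simp
qed

lemma eq_0_on_ball_if_eq_0_near_center:
  fixes h :: "real^'n \<Rightarrow> real"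
  assumes mv: "bump_mean_value_on A h" and A: "open A" and r: "r > 0"
    and sub: "cball p (4 * r * real CARD('n)) \<subseteq> A"
    and M: "\<And>w. w \<in> cball p (4 * r * real CARD('n)) \<Longrightarrow> \<bar>h w\<bar> \<le> M"
    and \<tau>0: "\<tau>0 \<le> r * real CARD('n)" "2 * cauchy_const TYPE('n) * \<tau>0 * exp 1 \<le> r"
    and z: "dist p z < \<tau>0 / 2" and \<epsilon>: "\<epsilon> > 0" "\<forall>w\<in>ball z \<epsilon>. h w = 0"
    and y: "y \<in> ball z \<tau>0"
  shows "h y = 0"
proof (cases "y = z")
  case True
  then show ?thesis
    using \<epsilon> by simp
next
  case False
  let ?K = "real CARD('n)"
  define \<tau> where "\<tau> = dist z y"
  define e where "e = (1/\<tau>) *\<^sub>R (y - z)"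
  have \<tau>: "\<tau> > 0" "\<tau> < \<tau>0"
    using False y by (auto simp: \<tau>_def)
  have e: "norm e = 1" and y_eq: "y = z + \<tau> *\<^sub>R e"
    using \<tau> by (auto simp: e_def \<tau>_def dist_norm norm_minus_commute)
  have sub_ball: "cball (z + s *\<^sub>R e) (2 * r * ?K) \<subseteq> cball p (4 * r * ?K)" if "s \<in> {0..\<tau>}" for s
  proof -
    have "dist p (z + s *\<^sub>R e) \<le> dist p z + dist z (z + s *\<^sub>R e)"
      by (rule dist_triangle)
    also have "\<dots> \<le> 2 * r * ?K"
      using that e z \<tau> \<tau>0 r by (simp add: dist_norm)
    finally show ?thesis
      by (intro cball_subset_cball_iff[THEN iffD2]) (simp add: dist_commute)
  qed
  have path: "z + s *\<^sub>R e \<in> A" if "s \<in> {0..\<tau>}" for s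
    using sub_ball[OF that] sub r by (force simp: subset_iff)
  have "h (z + \<tau> *\<^sub>R e) = 0"
  proof (rule eq_0_if_iter_dir_deriv_eq_0[OF mv A _ \<tau>(1) path])
    show "iter_dir_deriv h e k z = 0" for k
      using iter_dir_deriv_eq_0_on_ball[OF \<epsilon>(2), of e k] e \<epsilon>(1) by simp
    show "\<bar>iter_dir_deriv h e k (z + s *\<^sub>R e)\<bar> \<le> (cauchy_const TYPE('n) * real k / r) ^ k * M"
      if "s \<in> {0..\<tau>}" for k s
      using sub_ball[OF that] sub M e by (intro abs_iter_dir_deriv_le[OF mv A _ r]) auto
    have "2 * cauchy_const TYPE('n) * \<tau> * exp 1 \<le> 2 * cauchy_const TYPE('n) * \<tau>0 * exp 1"
      using \<tau> cauchy_const_pos[where 'n='n] by (intro mult_right_mono mult_left_mono) auto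
    then show "2 * cauchy_const TYPE('n) * \<tau> * exp 1 \<le> r"
      using \<tau>0 by linarith
  qed (use e r cauchy_const_pos in auto)
  then show ?thesis
    using y_eq by simp
qed

lemma bump_mean_value_zeros_closed:
  fixes h :: "real^'n \<Rightarrow> real"
  assumes mv: "bump_mean_value_on A h" and A: "open A" and p: "p \<in> A"
    and p_closure: "p \<in> closure (interior {x. h x = 0})"
  shows "p \<in> interior {x. h x = 0}"
proof -
  let ?K = "real CARD('n)"
  let ?C = "cauchy_const TYPE('n)"
  obtain R where R: "R > 0" "cball p (2 * R * ?K) \<subseteq> A"
    using open_obtain_cball_card_subset[OF A p] .
  define r where "r = R / 2"
  have r: "r > 0" and sub: "cball p (4 * r * ?K) \<subseteq> A"
    using R by (auto simp: r_def)
  have "compact (h ` cball p (4 * r * ?K))"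
    by (intro compact_continuous_image continuous_on_subset[OF bump_mean_value_on_imp_continuous_on[OF mv] sub])
      simp
  then obtain M where M: "\<And>w. w \<in> cball p (4 * r * ?K) \<Longrightarrow> \<bar>h w\<bar> \<le> M"
    using compact_imp_bounded[THEN bounded_iff[THEN iffD1]] by force
  define \<tau>0 where "\<tau>0 = min (r * ?K) (r / (2 * ?C * exp 1))"
  have \<tau>0: "\<tau>0 > 0" "\<tau>0 \<le> r * ?K" "2 * ?C * \<tau>0 * exp 1 \<le> r"
    using r cauchy_const_pos[where 'n='n] by (auto simp: \<tau>0_def field_simps min_def)
  have "\<exists>z\<in>interior {x. h x = 0}. dist z p < \<tau>0 / 2"
    using p_closure \<tau>0(1) unfolding closure_approachable by (meson half_gt_zero)
  then obtain z where z: "z \<in> interior {x. h x = 0}" "dist z p < \<tau>0 / 2"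
    by blast
  then obtain \<epsilon> where "\<epsilon> > 0" "ball z \<epsilon> \<subseteq> {x. h x = 0}"
    using mem_interior by blast
  then have \<epsilon>: "\<epsilon> > 0" "\<forall>w\<in>ball z \<epsilon>. h w = 0"
    by auto
  have "ball p (\<tau>0 / 2) \<subseteq> {x. h x = 0}"
  proof
    fix y
    assume "y \<in> ball p (\<tau>0 / 2)"
    then have "y \<in> ball z \<tau>0"
      using z(2) dist_triangle[of z y p] by (simp add: dist_commute)
    then show "y \<in> {x. h x = 0}"
      using eq_0_on_ball_if_eq_0_near_center[OF mv A r sub M \<tau>0(2,3) _ \<epsilon>] z(2)
      by (simp add: dist_commute)
  qed
  then show ?thesis
    using \<tau>0(1) by (meson centre_in_ball half_gt_zero interior_maximal open_ball subsetD)
qed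

lemma bump_mean_value_unique_continuation:
  fixes h :: "real^'n \<Rightarrow> real"
  assumes mv: "bump_mean_value_on A h" and A: "open A" and conn: "connected A"
    and a: "a \<in> A" and \<epsilon>: "\<epsilon> > 0" "\<forall>y\<in>ball a \<epsilon>. h y = 0"
  shows "\<forall>x\<in>A. h x = 0"
proof -
  define Z where "Z = A \<inter> interior {x. h x = 0}"
  have "openin (top_of_set A) Z"
    using A by (auto simp: Z_def openin_open_Int)
  moreover have "closedin (top_of_set A) Z"
  proof -
    have "A \<inter> closure Z \<subseteq> Z"
      using bump_mean_value_zeros_closed[OF mv A] closure_mono[of Z "interior {x. h x = 0}"]
      by (auto simp: Z_def)
    moreover have "Z \<subseteq> A"
      by (simp add: Z_def)
    ultimately have "Z = A \<inter> closure Z"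
      using closure_subset[of Z] by blast
    then show ?thesis
      by (metis closed_closure closedin_closed_Int)
  qed
  moreover have "a \<in> Z"
    using a \<epsilon> by (auto simp: Z_def mem_interior)
  ultimately have "Z = A"
    using conn by (auto simp: connected_clopen)
  then show ?thesis
    using interior_subset by (auto simp: Z_def)
qed

section \<open>The second order Taylor polynomial\<close>

lemma has_derivative_grad:
  fixes u :: "real^'n \<Rightarrow> real"
  assumes "u differentiable (at x)"
  shows "(u has_derivative (\<lambda>v. grad u x \<bullet> v)) (at x)"
proof -
  have d: "(u has_derivative frechet_derivative u (at x)) (at x)"
    using frechet_derivative_works assms by blast
  have eq: "frechet_derivative u (at x) v = grad u x \<bullet> v" for v
  proof -
    have "frechet_derivative u (at x) v = frechet_derivative u (at x) (\<Sum>i\<in>UNIV. v $ i *\<^sub>R axis i 1)"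
      using basis_expansion[of v] by (simp add: scalar_mult_eq_scaleR)
    also have "\<dots> = grad u x \<bullet> v"
      using has_derivative_linear[OF d]
      by (simp add: linear_sum linear_scale grad_def partial_deriv_def inner_vec_def mult.commute)
    finally show ?thesis .
  qed
  show ?thesis
    by (rule has_derivative_eq_rhs[OF d]) (simp add: fun_eq_iff eq)
qed

definition hessian :: "(real^'n \<Rightarrow> real) \<Rightarrow> real^'n \<Rightarrow> real^'n^'n" where
  "hessian u x = (\<chi> i. grad (partial_deriv u i) x)"

lemma C2_on_has_derivative:
  fixes u :: "real^'n \<Rightarrow> real"
  assumes "C2_on A u" "x \<in> A"
  shows "(u has_derivative (\<lambda>v. grad u x \<bullet> v)) (at x)"
  using assms by (intro has_derivative_grad) (simp add: C2_on_def)

lemma C2_on_grad_has_derivative: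
  fixes u :: "real^'n \<Rightarrow> real"
  assumes "C2_on A u" "x \<in> A"
  shows "((\<lambda>x. grad u x $ i) has_derivative (\<lambda>v. hessian u x $ i \<bullet> v)) (at x)"
  using assms has_derivative_grad[of "partial_deriv u i" x]
  by (simp add: C2_on_def grad_def hessian_def)

lemma C2_on_continuous_on_hessian:
  fixes u :: "real^'n \<Rightarrow> real"
  assumes "C2_on A u"
  shows "continuous_on A (hessian u)"
proof -
  have "hessian u = (\<lambda>x. \<chi> i. \<chi> j. partial_deriv (partial_deriv u i) j x)"
    by (simp add: hessian_def grad_def fun_eq_iff)
  then show ?thesis
    using assms by (simp add: C2_on_def continuous_intros)
qed

lemma trace_hessian: "(\<Sum>i\<in>UNIV. hessian u x $ i $ i) = laplacian u x"
  by (simp add: hessian_def grad_def laplacian_def)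

definition taylor2 :: "(real^'n \<Rightarrow> real) \<Rightarrow> real^'n \<Rightarrow> real^'n \<Rightarrow> real" where
  "taylor2 u x0 x = u x0 + grad u x0 \<bullet> (x - x0) + (1/2) * ((x - x0) \<bullet> (hessian u x0 *v (x - x0)))"

definition sym_hessian :: "(real^'n \<Rightarrow> real) \<Rightarrow> real^'n \<Rightarrow> real^'n^'n" where
  "sym_hessian u x0 = (1/2) *\<^sub>R (hessian u x0 + transpose (hessian u x0))"

lemma sym_hessian_mult:
  "sym_hessian u x0 *v d = (1/2) *\<^sub>R (hessian u x0 *v d + transpose (hessian u x0) *v d)"
  by (simp add: vec_eq_iff matrix_vector_mult_def sym_hessian_def transpose_def sum.distrib
      sum_distrib_left algebra_simps)

lemma taylor2_has_derivative:
  fixes u :: "real^'n \<Rightarrow> real"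
  shows "(taylor2 u x0 has_derivative (\<lambda>v. (grad u x0 + sym_hessian u x0 *v (x - x0)) \<bullet> v)) (at x)"
proof -
  let ?S = "hessian u x0"
  let ?d = "x - x0"
  have "((\<lambda>x. x - x0) has_derivative (\<lambda>v. v)) (at x)"
    by (auto intro!: derivative_eq_intros)
  from bounded_linear.has_derivative[OF matrix_vector_mul_bounded_linear this]
  have lin: "((\<lambda>x. ?S *v (x - x0)) has_derivative (\<lambda>v. ?S *v v)) (at x)" .
  have "(taylor2 u x0 has_derivative
      (\<lambda>v. grad u x0 \<bullet> v + (1/2) * (?d \<bullet> (?S *v v) + v \<bullet> (?S *v ?d)))) (at x)"
    unfolding taylor2_def[abs_def]
    by (rule has_derivative_eq_rhs, (rule derivative_intros lin)+) (auto simp: fun_eq_iff)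
  moreover have "grad u x0 \<bullet> v + (1/2) * (?d \<bullet> (?S *v v) + v \<bullet> (?S *v ?d))
      = (grad u x0 + sym_hessian u x0 *v ?d) \<bullet> v" for v
  proof -
    have "?d \<bullet> (?S *v v) = (transpose ?S *v ?d) \<bullet> v"
      by (simp add: dot_lmul_matrix)
    then show ?thesis
      by (simp add: sym_hessian_mult inner_add_left inner_commute algebra_simps)
  qed
  ultimately show ?thesis
    by simp
qed

lemma taylor2_grad_has_derivative:
  fixes u :: "real^'n \<Rightarrow> real"
  shows "((\<lambda>x. (grad u x0 + sym_hessian u x0 *v (x - x0)) $ i) has_derivative
    (\<lambda>v. sym_hessian u x0 $ i \<bullet> v)) (at x)"
  by (simp add: matrix_vector_mul_component) (auto intro!: derivative_eq_intros)

lemma trace_sym_hessian: "(\<Sum>i\<in>UNIV. sym_hessian u x0 $ i $ i) = laplacian u x0"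
  by (simp add: sym_hessian_def transpose_def trace_hessian[symmetric] sum_distrib_left[symmetric]
      algebra_simps)

text \<open>\<open>\<Delta>u\<close> is constant, so the Taylor polynomial has the same Laplacian as \<open>u\<close>.\<close>
lemma bump_mean_value_on_taylor2_diff:
  fixes u :: "real^'n \<Rightarrow> real"
  assumes C2: "C2_on A u" and lap: "\<forall>x\<in>A. laplacian u x = c" and x0: "x0 \<in> A"
  shows "bump_mean_value_on A (\<lambda>x. taylor2 u x0 x - u x)"
proof (rule bump_mean_value_on_if_trace_eq_0)
  fix x
  assume x: "x \<in> A"
  show "((\<lambda>x. taylor2 u x0 x - u x) has_derivative
      (\<lambda>v. ((grad u x0 + sym_hessian u x0 *v (x - x0)) - grad u x) \<bullet> v)) (at x)"
    by (rule has_derivative_eq_rhs[OF has_derivative_diff[OF taylor2_has_derivative C2_on_has_derivative[OF C2 x]]])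
       (simp add: fun_eq_iff inner_diff_left)
  show "((\<lambda>x. ((grad u x0 + sym_hessian u x0 *v (x - x0)) - grad u x) $ i) has_derivative
      (\<lambda>v. (sym_hessian u x0 - hessian u x) $ i \<bullet> v)) (at x)" for i
    using has_derivative_diff[OF taylor2_grad_has_derivative C2_on_grad_has_derivative[OF C2 x]]
    by (simp add: inner_diff_left)
  show "(\<Sum>i\<in>UNIV. (sym_hessian u x0 - hessian u x) $ i $ i) = 0"
    using lap x x0 by (simp add: sum_subtractf trace_sym_hessian trace_hessian)
next
  show "continuous_on A (\<lambda>x. sym_hessian u x0 - hessian u x)"
    by (intro continuous_intros C2_on_continuous_on_hessian[OF C2])
qed

lemma quadratic_form_expand:
  fixes S :: "real^'n^'n" and x a :: "real^'n"
  shows "(x - a) \<bullet> (S *v (x - a)) =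
    (\<Sum>i\<in>UNIV. \<Sum>j\<in>UNIV. S$i$j * x$i * x$j)
    - (\<Sum>i\<in>UNIV. (\<Sum>j\<in>UNIV. (S$i$j + S$j$i) * a$j) * x$i)
    + (\<Sum>i\<in>UNIV. \<Sum>j\<in>UNIV. S$i$j * a$i * a$j)"
proof -
  have "(x - a) \<bullet> (S *v (x - a)) = (\<Sum>i\<in>UNIV. \<Sum>j\<in>UNIV. S$i$j * (x$i - a$i) * (x$j - a$j))"
    by (simp add: inner_vec_def matrix_vector_mult_def sum_distrib_left mult.commute mult.left_commute)
  also have "\<dots> = (\<Sum>i\<in>UNIV. \<Sum>j\<in>UNIV. S$i$j * x$i * x$j) - (\<Sum>i\<in>UNIV. \<Sum>j\<in>UNIV. S$i$j * a$j * x$i)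
      - (\<Sum>i\<in>UNIV. \<Sum>j\<in>UNIV. S$i$j * a$i * x$j) + (\<Sum>i\<in>UNIV. \<Sum>j\<in>UNIV. S$i$j * a$i * a$j)"
    by (simp add: algebra_simps sum.distrib sum_subtractf)
  also have "(\<Sum>i\<in>UNIV. \<Sum>j\<in>UNIV. S$i$j * a$i * x$j) = (\<Sum>i\<in>UNIV. \<Sum>j\<in>UNIV. S$j$i * a$j * x$i)"
    by (rule sum.swap)
  also have "(\<Sum>i\<in>UNIV. \<Sum>j\<in>UNIV. S$i$j * a$j * x$i) + (\<Sum>i\<in>UNIV. \<Sum>j\<in>UNIV. S$j$i * a$j * x$i)
      = (\<Sum>i\<in>UNIV. (\<Sum>j\<in>UNIV. (S$i$j + S$j$i) * a$j) * x$i)"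
    by (simp add: sum_distrib_right sum_distrib_left sum.distrib algebra_simps)
  ultimately show ?thesis
    by (simp add: algebra_simps)
qed

lemma quadratic_polynomial_on_taylor2: "quadratic_polynomial_on A (taylor2 u x0)"
proof -
  let ?S = "hessian u x0"
  let ?G = "grad u x0"
  define a where "a i j = ?S$i$j / 2" for i j
  define b where "b i = ?G$i - (1/2) * (\<Sum>j\<in>UNIV. (?S$i$j + ?S$j$i) * x0$j)" for i
  define c where "c = u x0 - ?G \<bullet> x0 + (1/2) * (\<Sum>i\<in>UNIV. \<Sum>j\<in>UNIV. ?S$i$j * x0$i * x0$j)"
  have "taylor2 u x0 x = (\<Sum>i\<in>UNIV. \<Sum>j\<in>UNIV. a i j * x$i * x$j) + (\<Sum>i\<in>UNIV. b i * x$i) + c" for x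
  proof -
    have "?G \<bullet> (x - x0) = (\<Sum>i\<in>UNIV. ?G$i * x$i) - ?G \<bullet> x0"
      by (simp add: inner_vec_def right_diff_distrib sum_subtractf)
    moreover have "(\<Sum>i\<in>UNIV. \<Sum>j\<in>UNIV. a i j * x$i * x$j)
        = (1/2) * (\<Sum>i\<in>UNIV. \<Sum>j\<in>UNIV. ?S$i$j * x$i * x$j)"
      by (simp add: a_def sum_distrib_left)
    moreover have "(\<Sum>i\<in>UNIV. b i * x$i) = (\<Sum>i\<in>UNIV. ?G$i * x$i)
        - (1/2) * (\<Sum>i\<in>UNIV. (\<Sum>j\<in>UNIV. (?S$i$j + ?S$j$i) * x0$j) * x$i)"
      by (simp add: b_def sum_subtractf sum_distrib_left algebra_simps)
    ultimately show ?thesis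
      unfolding taylor2_def quadratic_form_expand c_def by (simp add: algebra_simps)
  qed
  then show ?thesis
    unfolding quadratic_polynomial_on_def by blast
qed

section \<open>Nonnegativity of the Taylor remainder\<close>

lemma convex_on_sqrt_le_square_scaling:
  fixes f :: "'a::real_vector \<Rightarrow> real"
  assumes cvx: "convex_on S (\<lambda>x. sqrt (f x))" and "x0 \<in> S" "x \<in> S" "f x0 = 0"
    and nonneg: "f (x0 + s *\<^sub>R (x - x0)) \<ge> 0" "f x \<ge> 0" and s: "0 \<le> s" "s \<le> 1"
  shows "f (x0 + s *\<^sub>R (x - x0)) \<le> s\<^sup>2 * f x"
proof -
  have "(1 - s) *\<^sub>R x0 + s *\<^sub>R x = x0 + s *\<^sub>R (x - x0)"
    by (simp add: algebra_simps)
  then have "sqrt (f (x0 + s *\<^sub>R (x - x0))) \<le> s * sqrt (f x)"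
    using convex_onD[OF cvx s] assms(2-4) by fastforce
  then have "(sqrt (f (x0 + s *\<^sub>R (x - x0))))\<^sup>2 \<le> (s * sqrt (f x))\<^sup>2"
    by (rule power_mono) (simp add: nonneg)
  then show ?thesis
    using nonneg s by (simp add: power_mult_distrib)
qed

lemma Maclaurin_second_order:
  fixes g g1 g2 :: "real \<Rightarrow> real"
  assumes g: "\<And>t. t \<in> {0..1} \<Longrightarrow> (g has_real_derivative g1 t) (at t)"
    and g1: "\<And>t. t \<in> {0..1} \<Longrightarrow> (g1 has_real_derivative g2 t) (at t)"
    and "g 0 = 0" "g1 0 = 0" and s: "s \<in> {0<..1}"
  obtains t where "0 < t" "t < s" "g s = g2 t / 2 * s\<^sup>2"
proof -
  define D where "D m = (case m of 0 \<Rightarrow> g | Suc 0 \<Rightarrow> g1 | _ \<Rightarrow> g2)" for m :: nat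
  have "\<forall>m t. m < 2 \<and> 0 \<le> t \<and> t \<le> s \<longrightarrow> DERIV (D m) t :> D (Suc m) t"
    using g g1 s by (auto simp: D_def less_2_cases_iff)
  from Maclaurin[of s 2 D g, OF _ _ _ this] s obtain t where
    "0 < t" "t < s" "g s = (\<Sum>m<2. D m 0 / fact m * s ^ m) + D 2 t / fact 2 * s ^ 2"
    by (auto simp: D_def)
  with assms(3,4) show ?thesis
    by (intro that[of t]) (simp_all add: D_def numeral_2_eq_2)
qed

lemma half_second_deriv_at_0_le_if_le_square:
  fixes g g1 g2 :: "real \<Rightarrow> real"
  assumes g: "\<And>t. t \<in> {0..1} \<Longrightarrow> (g has_real_derivative g1 t) (at t)"
    and g1: "\<And>t. t \<in> {0..1} \<Longrightarrow> (g1 has_real_derivative g2 t) (at t)"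
    and g2: "continuous_on {0..1} g2" and "g 0 = 0" "g1 0 = 0"
    and le_square: "\<And>s. s \<in> {0<..1} \<Longrightarrow> g s \<le> s\<^sup>2 * g 1"
  shows "g2 0 / 2 \<le> g 1"
proof (rule ccontr)
  assume "\<not> g2 0 / 2 \<le> g 1"
  then have "g2 0 / 2 - g 1 > 0"
    by simp
  then obtain \<delta> where \<delta>: "\<delta> > 0"
    "\<forall>t\<in>{0..1}. dist t 0 < \<delta> \<longrightarrow> dist (g2 t) (g2 0) < g2 0 / 2 - g 1"
    using g2[unfolded continuous_on_iff] by (metis atLeastAtMost_iff order_refl zero_le_one)
  define s where "s = min 1 (\<delta> / 2)"
  have s: "s \<in> {0<..1}"
    using \<delta> by (auto simp: s_def)
  obtain t where t: "0 < t" "t < s" "g s = g2 t / 2 * s\<^sup>2"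
    using Maclaurin_second_order[OF g g1 assms(4,5) s] .
  have "g2 t / 2 * s\<^sup>2 \<le> g 1 * s\<^sup>2"
    using le_square[OF s] t by (simp add: mult.commute)
  then have "g2 t / 2 \<le> g 1"
    using s by simp
  moreover have "dist (g2 t) (g2 0) < g2 0 / 2 - g 1"
    using \<delta>(2) t s by (auto simp: s_def dist_real_def)
  ultimately show False
    by (auto simp: dist_real_def abs_less_iff)
qed

lemma C2_on_has_real_derivative_along_line:
  fixes u :: "real^'n \<Rightarrow> real"
  assumes "C2_on A u" and "x0 + t *\<^sub>R d \<in> A"
  shows "((\<lambda>t. u (x0 + t *\<^sub>R d)) has_real_derivative grad u (x0 + t *\<^sub>R d) \<bullet> d) (at t)"
proof -
  have "((\<lambda>t. x0 + t *\<^sub>R d) has_derivative (\<lambda>s. s *\<^sub>R d)) (at t)"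
    by (auto intro!: derivative_eq_intros)
  from diff_chain_at[OF this C2_on_has_derivative[OF assms]]
  show ?thesis
    unfolding has_field_derivative_def o_def by (rule has_derivative_eq_rhs) (simp add: fun_eq_iff)
qed

lemma C2_on_grad_has_real_derivative_along_line:
  fixes u :: "real^'n \<Rightarrow> real"
  assumes "C2_on A u" and "x0 + t *\<^sub>R d \<in> A"
  shows "((\<lambda>t. grad u (x0 + t *\<^sub>R d) \<bullet> d) has_real_derivative
    d \<bullet> (hessian u (x0 + t *\<^sub>R d) *v d)) (at t)"
proof -
  have "((\<lambda>t. x0 + t *\<^sub>R d) has_derivative (\<lambda>s. s *\<^sub>R d)) (at t)"
    by (auto intro!: derivative_eq_intros)
  from diff_chain_at[OF this C2_on_grad_has_derivative[OF assms]]
  have "((\<lambda>t. grad u (x0 + t *\<^sub>R d) $ i) has_real_derivative hessian u (x0 + t *\<^sub>R d) $ i \<bullet> d) (at t)"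
    for i
    unfolding has_field_derivative_def o_def by (rule has_derivative_eq_rhs) (simp add: fun_eq_iff)
  then have "((\<lambda>t. \<Sum>i\<in>UNIV. grad u (x0 + t *\<^sub>R d) $ i * d $ i) has_real_derivative
      (\<Sum>i\<in>UNIV. (hessian u (x0 + t *\<^sub>R d) $ i \<bullet> d) * d $ i)) (at t)"
    by (intro DERIV_sum DERIV_cmult_right)
  then show ?thesis
    by (simp add: inner_vec_def matrix_vector_mul_component mult.commute)
qed

lemma C2_on_continuous_on_hessian_form_along_line:
  fixes u :: "real^'n \<Rightarrow> real"
  assumes C2: "C2_on A u" and "\<And>t. t \<in> S \<Longrightarrow> x0 + t *\<^sub>R d \<in> A"
  shows "continuous_on S (\<lambda>t. d \<bullet> (hessian u (x0 + t *\<^sub>R d) *v d))"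
proof -
  have "continuous_on S (\<lambda>t. hessian u (x0 + t *\<^sub>R d))"
    by (rule continuous_on_compose2[OF C2_on_continuous_on_hessian[OF C2]])
      (use assms(2) in \<open>auto intro!: continuous_intros\<close>)
  then have "continuous_on S (\<lambda>t. \<Sum>i\<in>UNIV. d $ i * (hessian u (x0 + t *\<^sub>R d) $ i \<bullet> d))"
    by (intro continuous_intros)
  then show ?thesis
    by (simp add: inner_vec_def matrix_vector_mul_component)
qed

text \<open>Along the segment from \<open>x0\<close> to \<open>x\<close>, \<open>v\<close> vanishes to second order at \<open>x0\<close>, and convexity of
  \<open>sqrt v\<close> forces \<open>v (x0 + s (x - x0)) \<le> s\<^sup>2 v x\<close>; comparing with the second derivative
  \<open>- (x - x0) \<bullet> (hessian u x0 *v (x - x0))\<close> at \<open>s = 0\<close> gives \<open>u x \<le> taylor2 u x0 x\<close>.\<close>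
lemma taylor2_diff_nonneg:
  fixes u :: "real^'n \<Rightarrow> real"
  assumes C2: "C2_on A u" and r: "r > 0" and ball: "ball x0 r \<subseteq> A"
    and v_nonneg: "\<forall>x\<in>ball x0 r. u x0 + grad u x0 \<bullet> (x - x0) - u x \<ge> 0"
    and cvx: "convex_on (ball x0 r) (\<lambda>x. sqrt (u x0 + grad u x0 \<bullet> (x - x0) - u x))"
    and x: "x \<in> ball x0 r"
  shows "taylor2 u x0 x - u x \<ge> 0"
proof -
  define d where "d = x - x0"
  define v where "v y = u x0 + grad u x0 \<bullet> (y - x0) - u y" for y
  define g where "g t = v (x0 + t *\<^sub>R d)" for t
  define g1 where "g1 t = grad u x0 \<bullet> d - grad u (x0 + t *\<^sub>R d) \<bullet> d" for t
  define g2 where "g2 t = - (d \<bullet> (hessian u (x0 + t *\<^sub>R d) *v d))" for t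
  have in_ball: "x0 + t *\<^sub>R d \<in> ball x0 r" if "t \<in> {0..1}" for t
    using x that mult_left_le_one_le[of "norm d" t]
    by (auto simp: d_def dist_norm norm_minus_commute)
  then have in_A: "x0 + t *\<^sub>R d \<in> A" if "t \<in> {0..1}" for t
    using ball that by blast
  have "(g has_real_derivative g1 t) (at t)" if "t \<in> {0..1}" for t
    unfolding g_def[abs_def] g1_def v_def
    using C2_on_has_real_derivative_along_line[OF C2 in_A[OF that]]
    by (auto intro!: derivative_eq_intros)
  moreover have "(g1 has_real_derivative g2 t) (at t)" if "t \<in> {0..1}" for t
    unfolding g1_def[abs_def] g2_def
    using C2_on_grad_has_real_derivative_along_line[OF C2 in_A[OF that]]
    by (auto intro!: derivative_eq_intros)
  moreover have "continuous_on {0..1} g2"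
    unfolding g2_def[abs_def]
    by (intro continuous_intros C2_on_continuous_on_hessian_form_along_line[OF C2 in_A])
  moreover have "g 0 = 0" "g1 0 = 0"
    by (simp_all add: g_def g1_def v_def)
  moreover have "g s \<le> s\<^sup>2 * g 1" if "s \<in> {0<..1}" for s
  proof -
    have "convex_on (ball x0 r) (\<lambda>y. sqrt (v y))" "v x0 = 0"
      using cvx by (simp_all add: v_def)
    moreover have "v (x0 + s *\<^sub>R d) \<ge> 0" "v x \<ge> 0"
      using v_nonneg[rule_format, OF in_ball[of s]] v_nonneg[rule_format, OF x] that
      unfolding v_def by auto
    ultimately show ?thesis
      using convex_on_sqrt_le_square_scaling[of "ball x0 r" v x0 x s] r x that
      by (simp add: g_def d_def)
  qed
  ultimately have "g2 0 / 2 \<le> g 1"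
    by (rule half_second_deriv_at_0_le_if_le_square)
  moreover have "taylor2 u x0 x - u x = g 1 - g2 0 / 2"
    by (simp add: taylor2_def g_def g2_def v_def d_def)
  ultimately show ?thesis
    by simp
qed

theorem proposition3p1:
  fixes A :: "(real^'n) set" and u :: "real^'n \<Rightarrow> real" and x0 :: "real^'n"
  assumes "CARD('n) \<ge> 2"
    and "bounded A" and "connected A" and "open A"
    and "C2_on A u"
    and "\<forall>x\<in>A. laplacian u x = -1"
    and "x0 \<in> A"
    and "\<exists>r>0. ball x0 r \<subseteq> A \<and>
           (\<forall>x\<in>ball x0 r. u x0 + inner (grad u x0) (x - x0) - u x \<ge> 0) \<and>
           convex_on (ball x0 r) (\<lambda>x. sqrt (u x0 + inner (grad u x0) (x - x0) - u x))"
  shows "quadratic_polynomial_on A u"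
proof -
  obtain r where r: "r > 0" and ball: "ball x0 r \<subseteq> A"
    and v_nonneg: "\<forall>x\<in>ball x0 r. u x0 + inner (grad u x0) (x - x0) - u x \<ge> 0"
    and cvx: "convex_on (ball x0 r) (\<lambda>x. sqrt (u x0 + inner (grad u x0) (x - x0) - u x))"
    using assms(8) by blast
  define h where "h x = taylor2 u x0 x - u x" for x
  have mv: "bump_mean_value_on A h"
    unfolding h_def[abs_def] by (rule bump_mean_value_on_taylor2_diff[OF assms(5,6,7)])
  have "h x \<ge> 0" if "x \<in> ball x0 r" for x
    unfolding h_def by (rule taylor2_diff_nonneg[OF assms(5) r ball v_nonneg cvx that])
  moreover have "h x0 = 0"
    by (simp add: h_def taylor2_def)
  ultimately obtain R where "R > 0" "\<forall>z\<in>ball x0 R. h z = 0"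
    using bump_mean_value_eq_0_near_zero_min[OF mv r ball] by blast
  then have "\<forall>x\<in>A. u x = taylor2 u x0 x"
    using bump_mean_value_unique_continuation[OF mv assms(4,3,7)] by (simp add: h_def)
  then show ?thesis
    using quadratic_polynomial_on_taylor2[of A u x0] by (simp add: quadratic_polynomial_on_def)
qed

end
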